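(* Let $\alpha>0$, $\beta\geq0$, and let $g\in H(\mathbb D)$ be such that $g$ has no zeros in $\mathbb D$ and an analytic branch of $\log(g)$ belongs to $\mathcal B$. Then $S_g: H^{\infty}_\alpha\rightarrow H^{\infty}_\beta$ is bounded if and only if $$\limsup_{t\rightarrow1^-}\sup_{0\leq\theta<2\pi}(1-t^2)^\beta\int_0^t\frac{|g(re^{i\theta})|}{(1-r^2)^{\alpha+1}}\,dr<+\infty\,.$$
   Context: $\mathbb D$ is the open unit disk and $H(\mathbb D)$ the space of analytic functions on $\mathbb D$. For $\alpha\geq0$, $H^{\infty}_\alpha=\{f\in H(\mathbb D): \|f\|_{H^\infty_\alpha}:=\sup_{z\in\mathbb D}(1-|z|^2)^\alpha|f(z)|<\infty\}$. The Bloch space is $\mathcal B=\{f\in H(\mathbb D): |f(0)|+\sup_{z\in\mathbb D}(1-|z|^2)|f'(z)|<\infty\}$. For $g\in H(\mathbb D)$, $(S_gf)(z)=\int_0^z f'(\omega)g(\omega)\,d\omega$. *)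

theory Defs
  imports "HOL-Complex_Analysis.Complex_Analysis"
begin

definition Hinf_weighted :: "real \<Rightarrow> (complex \<Rightarrow> complex) set" where
  "Hinf_weighted \<alpha> = {f. f holomorphic_on ball 0 1 \<and>
     bounded ((\<lambda>z. (1 - norm z ^ 2) powr \<alpha> * norm (f z)) ` ball 0 1)}"

definition Hinf_norm :: "real \<Rightarrow> (complex \<Rightarrow> complex) \<Rightarrow> real" where
  "Hinf_norm \<alpha> f = (SUP z\<in>ball 0 1. (1 - norm z ^ 2) powr \<alpha> * norm (f z))"

definition Bloch :: "(complex \<Rightarrow> complex) set" where
  "Bloch = {f. f holomorphic_on ball 0 1 \<and>
     bounded ((\<lambda>z. (1 - norm z ^ 2) * norm (deriv f z)) ` ball 0 1)}"

definition S_op :: "(complex \<Rightarrow> complex) \<Rightarrow> (complex \<Rightarrow> complex) \<Rightarrow> complex \<Rightarrow> complex" where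
  "S_op g f z = contour_integral (linepath 0 z) (\<lambda>w. deriv f w * g w)"

definition S_bounded :: "(complex \<Rightarrow> complex) \<Rightarrow> real \<Rightarrow> real \<Rightarrow> bool" where
  "S_bounded g \<alpha> \<beta> \<longleftrightarrow> (\<exists>C. \<forall>f\<in>Hinf_weighted \<alpha>.
      S_op g f \<in> Hinf_weighted \<beta> \<and> Hinf_norm \<beta> (S_op g f) \<le> C * Hinf_norm \<alpha> f)"

end

theory Submission
  imports Defs
begin

text \<open>Sufficiency: by the Cauchy estimate \<open>\<bar>f' w\<bar> \<le> C \<parallel>f\<parallel>\<^sub>\<alpha> / (1 - \<bar>w\<bar>\<^sup>2) powr (\<alpha> + 1)\<close>, so
  integrating \<open>f' g\<close> along the radius through \<open>z\<close> bounds \<open>(1 - \<bar>z\<bar>\<^sup>2) powr \<beta> * \<bar>S\<^sub>g f z\<bar>\<close> by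
  \<open>C \<parallel>f\<parallel>\<^sub>\<alpha>\<close> times the weighted radial integral of \<open>\<bar>g\<bar>\<close>.

  Necessity: write \<open>g = exp h\<close>. For a direction \<open>\<zeta>\<close> let \<open>W z = - Ln (1 - cnj \<zeta> * z)\<close>, which maps
  the disc into the strip \<open>\<bar>Im w\<bar> < pi / 2\<close>, and take \<open>f\<close> with
  \<open>f' = exp ((\<alpha> + 1) W - \<i> \<Phi> (W))\<close>. Then \<open>\<parallel>f\<parallel>\<^sub>\<alpha>\<close> is controlled by the supremum of \<open>Im \<Phi>\<close> on the
  strip, and along the radius towards \<open>\<zeta>\<close> the argument of \<open>f' g\<close> is \<open>Im h - Re \<Phi>\<close>. Because \<open>h\<close> is
  a Bloch function, \<open>\<lambda>x. Im h ((1 - exp (- x)) \<zeta>)\<close> is Lipschitz on \<open>[0, \<infinity>)\<close>, and a Lipschitz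
  function is approximated within \<open>pi / 3\<close> on any bounded interval by an entire \<open>\<Phi>\<close>, real on
  the real axis, whose imaginary part on the strip is bounded independently of the interval
  (a sum of translated error functions). Then \<open>Re (f' g) \<ge> \<bar>f' g\<bar> / 2\<close> on the radius, so
  \<open>\<bar>S\<^sub>g f (t \<zeta>)\<bar>\<close> is at least half the radial integral while \<open>\<parallel>f\<parallel>\<^sub>\<alpha>\<close> stays bounded.

  For \<open>t \<le> b < 1\<close> the radial integrals are bounded by compactness, so the \<open>Limsup\<close>
  condition amounts to a bound uniform in \<open>t \<in> [0, 1)\<close> and \<open>\<theta>\<close>.\<close>

section \<open>Radial integrals on the unit disc\<close>

lemma convex_segment_primitive:
  fixes F :: "complex \<Rightarrow> complex"
  assumes "convex S" "open S" "F holomorphic_on S" "a \<in> S"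
  defines "P \<equiv> \<lambda>z. contour_integral (linepath a z) F"
  shows segment_primitive_deriv: "\<And>z. z \<in> S \<Longrightarrow> (P has_field_derivative F z) (at z)"
    and segment_primitive_contour: "\<And>u v. u \<in> S \<Longrightarrow> v \<in> S \<Longrightarrow> (F has_contour_integral (P v - P u)) (linepath u v)"
proof -
  obtain Q where Q: "\<And>x. x \<in> S \<Longrightarrow> (Q has_field_derivative F x) (at x within S)"
    using holomorphic_convex_primitive'[OF assms(1-3)] by blast
  have Q_contour: "(F has_contour_integral (Q v - Q u)) (linepath u v)" if "u \<in> S" "v \<in> S" for u v
    using contour_integral_primitive[OF Q, of "linepath u v"] closed_segment_subset[OF that assms(1)]
    by simp
  have P_eq: "P z = Q z - Q a" if "z \<in> S" for z
    unfolding P_def using Q_contour[OF assms(4) that] by (rule contour_integral_unique)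
  show "(F has_contour_integral (P v - P u)) (linepath u v)" if "u \<in> S" "v \<in> S" for u v
    using Q_contour[OF that] by (simp add: P_eq that)
  show "(P has_field_derivative F z) (at z)" if "z \<in> S" for z
  proof -
    have "((\<lambda>z. Q z - Q a) has_field_derivative F z) (at z)"
      using Q[OF that] at_within_open[OF that assms(2)] by (auto intro!: derivative_eq_intros)
    then show ?thesis
      by (rule has_field_derivative_transform_within_open[OF _ assms(2) that]) (simp add: P_eq)
  qed
qed

lemma ball_segment_primitive_holomorphic:
  assumes "F holomorphic_on ball 0 1"
  shows "(\<lambda>z. contour_integral (linepath 0 z) F) holomorphic_on ball 0 1"
proof -
  have "((\<lambda>z. contour_integral (linepath 0 z) F) has_field_derivative F z) (at z)" if "z \<in> ball 0 1" for z
    using segment_primitive_deriv[OF convex_ball open_ball assms, of 0 z] that by simp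
  then show ?thesis
    unfolding holomorphic_on_open[OF open_ball] by blast
qed

lemma S_op_holomorphic:
  assumes "f holomorphic_on ball 0 1" "g holomorphic_on ball 0 1"
  shows "S_op g f holomorphic_on ball 0 1"
  unfolding S_op_def[abs_def] using assms
  by (intro ball_segment_primitive_holomorphic holomorphic_intros holomorphic_deriv) auto

lemma polar_decomposition:
  fixes z :: complex
  shows "\<exists>\<zeta>. norm \<zeta> = 1 \<and> z = of_real (norm z) * \<zeta>"
  using Arg2pi_eq[of z] by (intro exI[of _ "exp (\<i> * of_real (Arg2pi z))"]) auto

lemma radial_in_ball:
  fixes \<zeta> :: complex
  shows "norm \<zeta> = 1 \<Longrightarrow> r \<in> {0..t} \<Longrightarrow> t < 1 \<Longrightarrow> of_real r * \<zeta> \<in> ball 0 1"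
  by (auto simp: norm_mult)

lemma continuous_on_radial:
  fixes G :: "complex \<Rightarrow> 'a::topological_space"
  assumes "continuous_on (ball 0 1) G" "t < 1" "norm \<zeta> = 1"
  shows "continuous_on {0..t} (\<lambda>r. G (of_real r * \<zeta>))"
  by (rule continuous_on_compose2[OF assms(1)]) (use assms in \<open>auto intro!: continuous_intros simp: norm_mult\<close>)

lemma contour_integral_radial:
  fixes G :: "complex \<Rightarrow> complex"
  assumes "continuous_on (ball 0 1) G" "0 \<le> t" "t < 1" "norm \<zeta> = 1"
  shows "contour_integral (linepath 0 (of_real t * \<zeta>)) G = \<zeta> * integral {0..t} (\<lambda>r. G (of_real r * \<zeta>))"
proof (cases "t = 0")
  case False
  with assms have t: "t > 0" by simp
  have image: "(\<lambda>x. x / t) ` {0..t} = {0..1}"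
    using t by (auto simp: image_iff field_simps intro!: bexI[where x="t * _"] mult_le_cancel_left1)
  have "contour_integral (linepath 0 (of_real t * \<zeta>)) G
      = integral {0..1} (\<lambda>x. G (of_real (t * x) * \<zeta>)) * (of_real t * \<zeta>)"
    unfolding contour_integral_integral
    by (simp add: linepath_def scaleR_conv_of_real mult.assoc mult.left_commute)
  also have "integral {0..1} (\<lambda>x. G (of_real (t * x) * \<zeta>))
      = (1 / t) *\<^sub>R integral {0..t} (\<lambda>r. G (of_real r * \<zeta>))"
    using integral_stretch_real[of t 0 t "\<lambda>r. G (of_real r * \<zeta>)"] t image by simp
  also have "\<dots> * (of_real t * \<zeta>) = \<zeta> * integral {0..t} (\<lambda>r. G (of_real r * \<zeta>))"
    using t by (simp add: scaleR_conv_of_real field_simps)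
  finally show ?thesis .
qed simp

lemma norm_contour_integral_radial_le:
  fixes G :: "complex \<Rightarrow> complex"
  assumes "continuous_on (ball 0 1) G" "0 \<le> t" "t < 1" "norm \<zeta> = 1"
  shows "norm (contour_integral (linepath 0 (of_real t * \<zeta>)) G) \<le> integral {0..t} (\<lambda>r. norm (G (of_real r * \<zeta>)))"
proof -
  have cont: "continuous_on {0..t} (\<lambda>r. G (of_real r * \<zeta>))"
    using continuous_on_radial[OF assms(1,3,4)] .
  have "norm (contour_integral (linepath 0 (of_real t * \<zeta>)) G) = norm (integral {0..t} (\<lambda>r. G (of_real r * \<zeta>)))"
    using contour_integral_radial[OF assms] assms(4) by (simp add: norm_mult)
  also have "\<dots> \<le> integral {0..t} (\<lambda>r. norm (G (of_real r * \<zeta>)))"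
    using cont by (intro integral_norm_bound_integral integrable_continuous_interval continuous_intros) auto
  finally show ?thesis .
qed

definition weighted_radial_integral :: "(complex \<Rightarrow> complex) \<Rightarrow> real \<Rightarrow> real \<Rightarrow> complex \<Rightarrow> real" where
  "weighted_radial_integral g \<alpha> t \<zeta> = integral {0..t} (\<lambda>r. norm (g (of_real r * \<zeta>)) / (1 - r\<^sup>2) powr (\<alpha> + 1))"

lemma weighted_radial_integrand_continuous:
  fixes g :: "complex \<Rightarrow> complex"
  assumes "continuous_on (ball 0 1) g" "t < 1" "norm \<zeta> = 1"
  shows "continuous_on {0..t} (\<lambda>r. norm (g (of_real r * \<zeta>)) / (1 - r\<^sup>2) powr (\<alpha> + 1))"
proof -
  have "1 - r\<^sup>2 > 0" if "r \<in> {0..t}" for r :: real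
    using that assms(2) by (simp add: power_less_one_iff abs_less_iff)
  then show ?thesis
    using continuous_on_radial[OF assms] by (intro continuous_intros) force+
qed

lemma weighted_radial_integral_nonneg:
  assumes "continuous_on (ball 0 1) g" "t < 1" "norm \<zeta> = 1"
  shows "0 \<le> weighted_radial_integral g \<alpha> t \<zeta>"
  unfolding weighted_radial_integral_def
  using weighted_radial_integrand_continuous[OF assms]
  by (intro integral_nonneg integrable_continuous_interval) auto

section \<open>The weighted spaces and the sufficient condition\<close>

lemma Hinf_norm_ge:
  assumes "f \<in> Hinf_weighted a" "z \<in> ball 0 1"
  shows "(1 - norm z ^ 2) powr a * norm (f z) \<le> Hinf_norm a f"
proof -
  have "bounded ((\<lambda>z. (1 - norm z ^ 2) powr a * norm (f z)) ` ball 0 1)"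
    using assms(1) by (simp add: Hinf_weighted_def)
  then show ?thesis
    unfolding Hinf_norm_def by (intro cSUP_upper assms(2) bounded_imp_bdd_above)
qed

lemma Hinf_norm_nonneg: "f \<in> Hinf_weighted a \<Longrightarrow> 0 \<le> Hinf_norm a f"
  using Hinf_norm_ge[of f a 0] by (smt (verit) centre_in_ball mult_nonneg_nonneg norm_ge_zero powr_ge_zero zero_less_one)

lemma Hinf_norm_le:
  assumes "\<And>z. z \<in> ball 0 1 \<Longrightarrow> (1 - norm z ^ 2) powr a * norm (f z) \<le> M"
  shows "Hinf_norm a f \<le> M"
  unfolding Hinf_norm_def by (rule cSUP_least) (use assms in auto)

lemma Hinf_weightedI:
  assumes "f holomorphic_on ball 0 1" "\<And>z. z \<in> ball 0 1 \<Longrightarrow> (1 - norm z ^ 2) powr a * norm (f z) \<le> M"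
  shows "f \<in> Hinf_weighted a"
  unfolding Hinf_weighted_def bounded_iff using assms by fastforce

lemma deriv_weighted_bound:
  fixes f :: "complex \<Rightarrow> complex"
  assumes holf: "f holomorphic_on ball 0 1" and a: "a \<ge> 0"
    and bound: "\<And>z. z \<in> ball 0 1 \<Longrightarrow> (1 - norm z ^ 2) powr a * norm (f z) \<le> N"
    and w: "w \<in> ball 0 1"
  shows "norm (deriv f w) \<le> 4 powr (a + 1) * N / (1 - norm w ^ 2) powr (a + 1)"
proof -
  define r where "r = (1 - norm w) / 2"
  have w1: "norm w < 1" using w by simp
  have r: "r > 0" using w1 by (simp add: r_def)
  have w2: "1 - norm w ^ 2 > 0" using w1 by (simp add: power_less_one_iff abs_less_iff)
  have w2_le: "1 - norm w ^ 2 \<le> 2 * (1 - norm w)"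
  proof -
    have "1 - norm w ^ 2 = (1 - norm w) * (1 + norm w)" by (simp add: power2_eq_square algebra_simps)
    also have "\<dots> \<le> (1 - norm w) * 2" using w1 by (intro mult_left_mono) auto
    finally show ?thesis by simp
  qed
  have N: "N \<ge> 0" using bound[OF w] by (smt (verit) mult_nonneg_nonneg norm_ge_zero powr_ge_zero)
  have circle: "norm (f x) \<le> 4 powr a * N / (1 - norm w ^ 2) powr a" if "norm (w - x) = r" for x
  proof -
    have x: "norm x \<le> norm w + r"
      using norm_triangle_ineq2[of x w] that by (simp add: norm_minus_commute)
    then have x1: "norm x < 1" using w1 unfolding r_def by argo
    have "(1 - norm w ^ 2) / 4 \<le> 1 - norm x"
      using x w2_le unfolding r_def by argo
    also have "\<dots> \<le> 1 - norm x ^ 2"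
      using x1 by (simp add: power2_eq_square mult_left_le_one_le)
    finally have "((1 - norm w ^ 2) / 4) powr a \<le> (1 - norm x ^ 2) powr a"
      using w2 a by (intro powr_mono2) auto
    then have "(1 - norm w ^ 2) powr a / 4 powr a \<le> (1 - norm x ^ 2) powr a"
      using w2 by (simp add: powr_divide)
    then have "(1 - norm w ^ 2) powr a / 4 powr a * norm (f x) \<le> (1 - norm x ^ 2) powr a * norm (f x)"
      by (rule mult_right_mono) simp
    also have "\<dots> \<le> N" using bound[of x] x1 by simp
    finally show ?thesis using w2 by (simp add: divide_simps mult.commute)
  qed
  have "cball w r \<subseteq> ball 0 1"
  proof
    fix x assume "x \<in> cball w r"
    then have "norm x \<le> norm w + r"
      using norm_triangle_ineq2[of x w] by (auto simp: dist_norm norm_minus_commute)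
    then show "x \<in> ball 0 1" using w1 unfolding r_def by (simp only: mem_ball_0) argo
  qed
  then have "norm ((deriv ^^ 1) f w) \<le> fact 1 * (4 powr a * N / (1 - norm w ^ 2) powr a) / r ^ 1"
  proof (intro Cauchy_inequality r)
    assume sub: "cball w r \<subseteq> ball 0 1"
    show "f holomorphic_on ball w r"
      using holf sub ball_subset_cball holomorphic_on_subset by blast
    show "continuous_on (cball w r) f"
      using holomorphic_on_imp_continuous_on[OF holf] sub continuous_on_subset by blast
  qed (use circle in auto)
  then have "norm (deriv f w) \<le> (4 powr a * N / (1 - norm w ^ 2) powr a) / r"
    by simp
  also have "\<dots> \<le> (4 powr a * N / (1 - norm w ^ 2) powr a) / ((1 - norm w ^ 2) / 4)"
    using w2_le w2 N by (intro divide_left_mono) (auto simp: r_def)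
  also have "\<dots> = 4 powr (a + 1) * N / (1 - norm w ^ 2) powr (a + 1)"
    using w2 by (simp add: powr_add field_simps)
  finally show ?thesis by simp
qed

lemma norm_S_op_radial_le:
  fixes f g :: "complex \<Rightarrow> complex"
  assumes \<alpha>: "\<alpha> \<ge> 0" and holf: "f holomorphic_on ball 0 1" and holg: "g holomorphic_on ball 0 1"
    and f_bound: "\<And>z. z \<in> ball 0 1 \<Longrightarrow> (1 - norm z ^ 2) powr \<alpha> * norm (f z) \<le> N"
    and t: "0 \<le> t" "t < 1" and \<zeta>: "norm \<zeta> = 1"
  shows "norm (S_op g f (of_real t * \<zeta>)) \<le> 4 powr (\<alpha> + 1) * N * weighted_radial_integral g \<alpha> t \<zeta>"
proof -
  define F where "F w = deriv f w * g w" for w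
  have contF: "continuous_on (ball 0 1) F"
    unfolding F_def using holf holg
    by (intro holomorphic_on_imp_continuous_on holomorphic_intros holomorphic_deriv) auto
  have contg: "continuous_on (ball 0 1) g" using holg by (rule holomorphic_on_imp_continuous_on)
  have "norm (S_op g f (of_real t * \<zeta>)) \<le> integral {0..t} (\<lambda>r. norm (F (of_real r * \<zeta>)))"
    unfolding S_op_def F_def[symmetric] by (rule norm_contour_integral_radial_le[OF contF t \<zeta>])
  also have "\<dots> \<le> integral {0..t} (\<lambda>r. 4 powr (\<alpha> + 1) * N * (norm (g (of_real r * \<zeta>)) / (1 - r\<^sup>2) powr (\<alpha> + 1)))"
  proof (rule integral_le)
    show "(\<lambda>r. norm (F (of_real r * \<zeta>))) integrable_on {0..t}"
      using continuous_on_radial[OF contF t(2) \<zeta>]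
      by (intro integrable_continuous_interval continuous_intros)
    show "(\<lambda>r. 4 powr (\<alpha> + 1) * N * (norm (g (of_real r * \<zeta>)) / (1 - r\<^sup>2) powr (\<alpha> + 1))) integrable_on {0..t}"
      using weighted_radial_integrand_continuous[OF contg t(2) \<zeta>]
      by (intro integrable_continuous_interval continuous_on_mult_left)
    fix r assume r: "r \<in> {0..t}"
    have "norm (F (of_real r * \<zeta>)) = norm (deriv f (of_real r * \<zeta>)) * norm (g (of_real r * \<zeta>))"
      by (simp add: F_def norm_mult)
    also have "\<dots> \<le> 4 powr (\<alpha> + 1) * N / (1 - r ^ 2) powr (\<alpha> + 1) * norm (g (of_real r * \<zeta>))"
      using deriv_weighted_bound[OF holf \<alpha> f_bound radial_in_ball[OF \<zeta> r t(2)]] r \<zeta>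
      by (intro mult_right_mono) (auto simp: norm_mult)
    finally show "norm (F (of_real r * \<zeta>)) \<le> 4 powr (\<alpha> + 1) * N * (norm (g (of_real r * \<zeta>)) / (1 - r\<^sup>2) powr (\<alpha> + 1))"
      by simp
  qed
  also have "\<dots> = 4 powr (\<alpha> + 1) * N * weighted_radial_integral g \<alpha> t \<zeta>"
    unfolding weighted_radial_integral_def by (rule integral_mult_right)
  finally show ?thesis .
qed

lemma S_bounded_if_radial_bound:
  fixes g :: "complex \<Rightarrow> complex"
  assumes \<alpha>: "\<alpha> \<ge> 0" and holg: "g holomorphic_on ball 0 1"
    and K: "\<And>t \<zeta>. 0 \<le> t \<Longrightarrow> t < 1 \<Longrightarrow> norm \<zeta> = 1 \<Longrightarrow>
       (1 - t\<^sup>2) powr \<beta> * weighted_radial_integral g \<alpha> t \<zeta> \<le> K"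
  shows "S_bounded g \<alpha> \<beta>"
  unfolding S_bounded_def
proof (intro exI ballI conjI)
  fix f assume f: "f \<in> Hinf_weighted \<alpha>"
  have N: "Hinf_norm \<alpha> f \<ge> 0" by (rule Hinf_norm_nonneg[OF f])
  have holf: "f holomorphic_on ball 0 1" using f by (simp add: Hinf_weighted_def)
  have pointwise: "(1 - norm z ^ 2) powr \<beta> * norm (S_op g f z) \<le> 4 powr (\<alpha> + 1) * K * Hinf_norm \<alpha> f"
    if z: "z \<in> ball 0 1" for z
  proof -
    define t where "t = norm z"
    obtain \<zeta> where \<zeta>: "norm \<zeta> = 1" and z_eq: "z = of_real t * \<zeta>"
      using polar_decomposition unfolding t_def by blast
    have t: "0 \<le> t" "t < 1" using z by (auto simp: t_def)
    have "(1 - t\<^sup>2) powr \<beta> * norm (S_op g f z)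
        \<le> (1 - t\<^sup>2) powr \<beta> * (4 powr (\<alpha> + 1) * Hinf_norm \<alpha> f * weighted_radial_integral g \<alpha> t \<zeta>)"
      unfolding z_eq using norm_S_op_radial_le[OF \<alpha> holf holg Hinf_norm_ge[OF f] t \<zeta>]
      by (rule mult_left_mono) auto
    also have "\<dots> = 4 powr (\<alpha> + 1) * Hinf_norm \<alpha> f * ((1 - t\<^sup>2) powr \<beta> * weighted_radial_integral g \<alpha> t \<zeta>)"
      by (simp only: mult_ac)
    also have "\<dots> \<le> 4 powr (\<alpha> + 1) * Hinf_norm \<alpha> f * K"
      using K[OF t \<zeta>] N by (intro mult_left_mono) auto
    finally show ?thesis by (simp add: t_def mult_ac)
  qed
  show "S_op g f \<in> Hinf_weighted \<beta>"
    by (rule Hinf_weightedI[OF S_op_holomorphic[OF holf holg] pointwise])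
  show "Hinf_norm \<beta> (S_op g f) \<le> 4 powr (\<alpha> + 1) * K * Hinf_norm \<alpha> f"
    by (rule Hinf_norm_le[OF pointwise])
qed

section \<open>An entire approximation of the unit step\<close>

definition gauss_primitive :: "complex \<Rightarrow> complex" where
  "gauss_primitive u = contour_integral (linepath 0 u) (\<lambda>s. exp (- s\<^sup>2))"

lemma
  shows gauss_primitive_deriv: "(gauss_primitive has_field_derivative exp (- u\<^sup>2)) (at u)"
    and gauss_primitive_contour:
      "((\<lambda>s. exp (- s\<^sup>2)) has_contour_integral (gauss_primitive v - gauss_primitive u)) (linepath u v)"
proof -
  have "(\<lambda>s. exp (- s\<^sup>2)) holomorphic_on UNIV" by (intro holomorphic_intros)
  note primitive = convex_segment_primitive[OF convex_UNIV open_UNIV this UNIV_I]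
  show "(gauss_primitive has_field_derivative exp (- u\<^sup>2)) (at u)"
    using primitive(1)[of u] by (simp add: gauss_primitive_def[abs_def])
  show "((\<lambda>s. exp (- s\<^sup>2)) has_contour_integral (gauss_primitive v - gauss_primitive u)) (linepath u v)"
    using primitive(2)[of u v] by (simp add: gauss_primitive_def)
qed

lemma gauss_primitive_holomorphic: "gauss_primitive holomorphic_on UNIV"
  using gauss_primitive_deriv holomorphic_on_open[OF open_UNIV] by blast

lemma gauss_primitive_0 [simp]: "gauss_primitive 0 = 0"
  by (simp add: gauss_primitive_def)

definition gauss_primitive_real :: "real \<Rightarrow> real" where
  "gauss_primitive_real x = Re (gauss_primitive (of_real x))"

lemma gauss_primitive_real_deriv: "(gauss_primitive_real has_real_derivative exp (- x\<^sup>2)) (at x)"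
  and Im_gauss_primitive_real_deriv: "((\<lambda>x. Im (gauss_primitive (of_real x))) has_real_derivative 0) (at x)"
proof -
  have "((\<lambda>x. gauss_primitive (of_real x)) has_vector_derivative exp (- (of_real x)\<^sup>2)) (at x)"
    by (rule has_vector_derivative_real_field[OF gauss_primitive_deriv])
  moreover have "exp (- (complex_of_real x)\<^sup>2) = of_real (exp (- x\<^sup>2))"
    by (metis exp_of_real of_real_minus of_real_power)
  ultimately show "(gauss_primitive_real has_real_derivative exp (- x\<^sup>2)) (at x)"
    and "((\<lambda>x. Im (gauss_primitive (of_real x))) has_real_derivative 0) (at x)"
    using has_field_derivative_Re has_field_derivative_Im
    by (fastforce simp: gauss_primitive_real_def[abs_def])+
qed

lemma gauss_primitive_of_real: "gauss_primitive (of_real x) = of_real (gauss_primitive_real x)"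
proof -
  have "Im (gauss_primitive (of_real x)) = Im (gauss_primitive (of_real 0))"
    using DERIV_isconst_all Im_gauss_primitive_real_deriv by blast
  then show ?thesis by (simp add: gauss_primitive_real_def complex_eq_iff)
qed

lemma gauss_primitive_real_0 [simp]: "gauss_primitive_real 0 = 0"
  by (simp add: gauss_primitive_real_def)

lemma gauss_primitive_real_minus: "gauss_primitive_real (- x) = - gauss_primitive_real x"
proof -
  have "((\<lambda>x. gauss_primitive_real (- x) + gauss_primitive_real x) has_real_derivative 0) (at y)" for y
    using DERIV_add[OF DERIV_chain2[OF gauss_primitive_real_deriv, of "\<lambda>x. - x" "-1" y]
        gauss_primitive_real_deriv[of y]]
    by (simp add: DERIV_minus[OF DERIV_ident, simplified])
  then have "gauss_primitive_real (- x) + gauss_primitive_real x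
      = gauss_primitive_real (- 0) + gauss_primitive_real 0"
    using DERIV_isconst_all by blast
  then show ?thesis by simp
qed

lemma exp_minus_square_le:
  fixes x :: real
  shows "exp (- x\<^sup>2) \<le> exp 1 * exp (- 2 * \<bar>x\<bar>)"
proof -
  have "- x\<^sup>2 \<le> 1 + - 2 * \<bar>x\<bar>"
    using zero_le_power2[of "\<bar>x\<bar> - 1"] by (simp add: power2_eq_square algebra_simps abs_mult_self_eq)
  then show ?thesis by (simp flip: exp_add)
qed

lemma gauss_primitive_real_mono: "x \<le> y \<Longrightarrow> gauss_primitive_real x \<le> gauss_primitive_real y"
  by (rule DERIV_nonneg_imp_nondecreasing[of x y]) (use gauss_primitive_real_deriv exp_ge_zero in blast)+

lemma gauss_primitive_real_tail:
  assumes "0 \<le> x" "x \<le> y"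
  shows "gauss_primitive_real y - gauss_primitive_real x \<le> exp 1 / 2 * exp (- 2 * x)"
proof -
  define D where "D y = gauss_primitive_real y + exp 1 / 2 * exp (- 2 * y)" for y
  have "D y \<le> D x"
  proof (rule DERIV_nonpos_imp_nonincreasing[of x y D])
    fix z assume z: "x \<le> z" "z \<le> y"
    have "(D has_real_derivative exp (- z\<^sup>2) + exp 1 / 2 * (exp (- 2 * z) * (- 2))) (at z)"
      unfolding D_def[abs_def] by (auto intro!: derivative_eq_intros gauss_primitive_real_deriv)
    moreover have "exp (- z\<^sup>2) + exp 1 / 2 * (exp (- 2 * z) * (- 2)) \<le> 0"
      using exp_minus_square_le[of z] z assms by simp
    ultimately show "\<exists>d. (D has_real_derivative d) (at z) \<and> d \<le> 0" by blast
  qed (use assms in auto)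
  moreover have "0 \<le> exp 1 / 2 * exp (- 2 * y)" by simp
  ultimately show ?thesis unfolding D_def by linarith
qed

text \<open>The value of \<open>gauss_half_mass\<close> is \<open>sqrt pi / 2\<close>; only its positivity and the rate at
  which \<open>gauss_primitive_real\<close> approaches it are used.\<close>

definition gauss_half_mass :: real where
  "gauss_half_mass = (SUP x\<in>{0..}. gauss_primitive_real x)"

lemma gauss_half_mass_pos: "gauss_half_mass > 0"
  and gauss_half_mass_tail: "0 \<le> x \<Longrightarrow>
    gauss_primitive_real x \<le> gauss_half_mass \<and> gauss_half_mass - gauss_primitive_real x \<le> exp 1 / 2 * exp (- 2 * x)"
proof -
  have bdd: "bdd_above (gauss_primitive_real ` {0..})"
    using gauss_primitive_real_tail[of 0] by (intro bdd_aboveI2[where M="exp 1 / 2"]) auto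
  have upper: "gauss_primitive_real y \<le> gauss_half_mass" if "0 \<le> y" for y
    unfolding gauss_half_mass_def using bdd that by (intro cSUP_upper) auto
  have "gauss_primitive_real 0 < gauss_primitive_real 1"
    by (rule DERIV_pos_imp_increasing[of 0 1]) (use gauss_primitive_real_deriv exp_gt_zero in \<open>simp, blast\<close>)
  then show "gauss_half_mass > 0" using upper[of 1] by simp
  assume x: "0 \<le> x"
  have "gauss_half_mass \<le> gauss_primitive_real x + exp 1 / 2 * exp (- 2 * x)"
    unfolding gauss_half_mass_def
  proof (rule cSUP_least)
    fix y :: real assume "y \<in> {0..}"
    show "gauss_primitive_real y \<le> gauss_primitive_real x + exp 1 / 2 * exp (- 2 * x)"
    proof (cases "x \<le> y")
      case False
      moreover have "0 \<le> exp 1 / 2 * exp (- 2 * x)" by simp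
      ultimately show ?thesis using gauss_primitive_real_mono[of y x] by linarith
    next
      case True
      then show ?thesis using gauss_primitive_real_tail[OF x, of y] by linarith
    qed
  qed simp
  then show "gauss_primitive_real x \<le> gauss_half_mass \<and>
      gauss_half_mass - gauss_primitive_real x \<le> exp 1 / 2 * exp (- 2 * x)"
    using upper[OF x] by simp
qed

lemma norm_gauss_primitive_vertical_le:
  "norm (gauss_primitive (Complex x y) - gauss_primitive (of_real x)) \<le> \<bar>y\<bar> * exp (y\<^sup>2) * exp (- x\<^sup>2)"
proof -
  have "norm (gauss_primitive (Complex x y) - gauss_primitive (of_real x))
      \<le> exp (y\<^sup>2 - x\<^sup>2) * norm (Complex x y - of_real x)"
  proof (rule has_contour_integral_bound_linepath[OF gauss_primitive_contour])
    fix s assume "s \<in> closed_segment (of_real x) (Complex x y)"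
    then obtain u where u: "0 \<le> u" "u \<le> 1" and s: "s = (1 - u) *\<^sub>R of_real x + u *\<^sub>R Complex x y"
      unfolding closed_segment_def by blast
    have "Re s = x" "Im s = u * y" unfolding s by (simp_all add: algebra_simps)
    moreover have "(u * y)\<^sup>2 \<le> y\<^sup>2"
      using u by (simp add: power_mult_distrib mult_left_le_one_le power_le_one)
    ultimately show "norm (exp (- s\<^sup>2)) \<le> exp (y\<^sup>2 - x\<^sup>2)"
      by (simp add: power2_eq_square)
  qed simp
  also have "norm (Complex x y - of_real x) = \<bar>y\<bar>"
    by (simp add: complex_of_real_def cmod_def)
  finally show ?thesis by (simp add: exp_diff exp_minus field_simps)
qed

text \<open>The entire function \<open>smooth_step\<close> is a rescaled error function: it tends to the unit
  step exponentially fast along the real axis, and its imaginary part is exponentially small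
  in \<open>\<bar>Re u\<bar>\<close> on every horizontal strip.\<close>

definition smooth_step :: "complex \<Rightarrow> complex" where
  "smooth_step u = (gauss_primitive u / of_real gauss_half_mass + 1) / 2"

lemma smooth_step_holomorphic: "smooth_step holomorphic_on UNIV"
  unfolding smooth_step_def[abs_def] using gauss_half_mass_pos
  by (intro holomorphic_intros gauss_primitive_holomorphic) auto

lemma smooth_step_of_real:
  "smooth_step (of_real x) = of_real ((gauss_primitive_real x / gauss_half_mass + 1) / 2)"
  by (simp add: smooth_step_def gauss_primitive_of_real)

lemma smooth_step_real_error:
  "\<bar>(gauss_primitive_real x / gauss_half_mass + 1) / 2 - (if 0 \<le> x then 1 else 0)\<bar>
    \<le> exp 1 / (4 * gauss_half_mass) * exp (- 2 * \<bar>x\<bar>)"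
proof -
  have L: "gauss_half_mass > 0" by (rule gauss_half_mass_pos)
  from gauss_half_mass_tail[of "\<bar>x\<bar>"] have tail:
    "gauss_primitive_real \<bar>x\<bar> \<le> gauss_half_mass"
    "gauss_half_mass - gauss_primitive_real \<bar>x\<bar> \<le> exp 1 / 2 * exp (- 2 * \<bar>x\<bar>)"
    by auto
  have "\<bar>(gauss_primitive_real x / gauss_half_mass + 1) / 2 - (if 0 \<le> x then 1 else 0)\<bar>
      = (gauss_half_mass - gauss_primitive_real \<bar>x\<bar>) / (2 * gauss_half_mass)"
  proof (cases "0 \<le> x")
    case True
    then show ?thesis using tail(1) L by (simp add: field_simps)
  next
    case False
    then show ?thesis using tail(1) L by (simp add: gauss_primitive_real_minus field_simps)
  qed
  also have "\<dots> \<le> exp 1 / 2 * exp (- 2 * \<bar>x\<bar>) / (2 * gauss_half_mass)"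
    using tail(2) L by (intro divide_right_mono) auto
  finally show ?thesis by (simp add: field_simps)
qed

lemma abs_Im_smooth_step_le:
  "\<bar>Im (smooth_step (Complex x y))\<bar> \<le> \<bar>y\<bar> * exp (y\<^sup>2) * exp 1 * exp (- 2 * \<bar>x\<bar>) / (2 * gauss_half_mass)"
proof -
  have L: "gauss_half_mass > 0" by (rule gauss_half_mass_pos)
  have "\<bar>Im (smooth_step (Complex x y))\<bar>
      = \<bar>Im (gauss_primitive (Complex x y) - gauss_primitive (of_real x))\<bar> / (2 * gauss_half_mass)"
    using L by (simp add: smooth_step_def Im_divide_of_real gauss_primitive_of_real)
  also have "\<dots> \<le> \<bar>y\<bar> * exp (y\<^sup>2) * exp (- x\<^sup>2) / (2 * gauss_half_mass)"
    using abs_Im_le_cmod norm_gauss_primitive_vertical_le L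
    by (intro divide_right_mono) (blast intro: order_trans, simp)
  also have "\<dots> \<le> \<bar>y\<bar> * exp (y\<^sup>2) * (exp 1 * exp (- 2 * \<bar>x\<bar>)) / (2 * gauss_half_mass)"
    using L by (intro divide_right_mono mult_left_mono exp_minus_square_le) auto
  finally show ?thesis by (simp add: mult.assoc)
qed

lemma sum_power_inj_le:
  fixes q :: real
  assumes "0 \<le> q" "q < 1" "finite A" "inj_on f A"
  shows "(\<Sum>k\<in>A. q ^ f k) \<le> 1 / (1 - q)"
proof -
  have "(\<Sum>k\<in>A. q ^ f k) = (\<Sum>i\<in>f ` A. q ^ i)"
    by (simp add: sum.reindex[OF assms(4)])
  also have "\<dots> \<le> (\<Sum>i. q ^ i)"
    using assms by (intro sum_le_suminf summable_geometric) auto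
  also have "\<dots> = 1 / (1 - q)"
    using assms by (simp add: suminf_geometric)
  finally show ?thesis .
qed

lemma sum_exp_dist_le: "(\<Sum>k\<in>{1..K}. exp (- 2 * \<bar>v - real k\<bar>)) \<le> 4"
proof -
  have half: "(\<Sum>k\<in>A. exp (- 2 * \<bar>v - real k\<bar>)) \<le> 2"
    if "finite A" "inj_on f A" "\<And>k. k \<in> A \<Longrightarrow> real (f k) \<le> \<bar>v - real k\<bar>" for A and f :: "nat \<Rightarrow> nat"
  proof -
    have "exp 2 \<ge> (2::real)" using exp_ge_add_one_self[of 2] by simp
    then have q: "exp (- 2) \<le> (1 / 2 :: real)" by (simp add: exp_minus field_simps)
    have "(\<Sum>k\<in>A. exp (- 2 * \<bar>v - real k\<bar>)) \<le> (\<Sum>k\<in>A. exp (- 2) ^ f k)"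
      using that(3) by (intro sum_mono) (simp flip: exp_of_nat_mult add: mult.commute)
    also have "\<dots> \<le> 1 / (1 - exp (- 2))"
      using that q by (intro sum_power_inj_le) auto
    also have "\<dots> \<le> 2" using q by (simp add: field_simps)
    finally show ?thesis .
  qed
  define A where "A = {k\<in>{1..K}. real k \<le> v}"
  have A_floor: "int k \<le> \<lfloor>v\<rfloor>" if "k \<in> A" for k
    using that by (auto simp: A_def le_floor_iff)
  have inj: "inj_on (\<lambda>k. nat (\<lfloor>v\<rfloor> - int k)) A"
  proof (rule inj_onI)
    fix a b assume "a \<in> A" "b \<in> A" "nat (\<lfloor>v\<rfloor> - int a) = nat (\<lfloor>v\<rfloor> - int b)"
    with A_floor[of a] A_floor[of b] show "a = b" by (simp add: eq_nat_nat_iff)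
  qed
  have A_ceiling: "\<lceil>v\<rceil> \<le> int k" if "k \<in> {1..K} - A" for k
    using that by (auto simp: A_def ceiling_le_iff)
  have inj': "inj_on (\<lambda>k. nat (int k - \<lceil>v\<rceil>)) ({1..K} - A)"
  proof (rule inj_onI)
    fix a b assume "a \<in> {1..K} - A" "b \<in> {1..K} - A" "nat (int a - \<lceil>v\<rceil>) = nat (int b - \<lceil>v\<rceil>)"
    with A_ceiling[of a] A_ceiling[of b] show "a = b" by (simp add: eq_nat_nat_iff)
  qed
  have "A \<subseteq> {1..K}" by (auto simp: A_def)
  then have "(\<Sum>k\<in>{1..K}. exp (- 2 * \<bar>v - real k\<bar>))
      = (\<Sum>k\<in>A. exp (- 2 * \<bar>v - real k\<bar>)) + (\<Sum>k\<in>{1..K} - A. exp (- 2 * \<bar>v - real k\<bar>))"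
    using sum.subset_diff[OF _ finite_atLeastAtMost] by (simp add: add.commute)
  also have "(\<Sum>k\<in>A. exp (- 2 * \<bar>v - real k\<bar>)) \<le> 2"
    by (rule half[OF _ inj]) (auto simp: A_def le_floor_iff)
  also have "(\<Sum>k\<in>{1..K} - A. exp (- 2 * \<bar>v - real k\<bar>)) \<le> 2"
    by (rule half[OF _ inj']) (auto simp: A_def ceiling_le_iff)
  finally show ?thesis by simp
qed

text \<open>A sum of translated and dilated smooth steps, with jumps equal to the increments of
  \<open>\<phi>\<close> on the grid \<open>\<sigma> \<nat>\<close>: on the real axis it follows \<open>\<phi>\<close> up to \<open>O(B \<sigma>)\<close> when \<open>\<phi>\<close> is
  \<open>B\<close>-Lipschitz, while the exponential decay of each summand away from its node keeps the
  imaginary part bounded on horizontal strips, uniformly in the number of nodes.\<close>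

definition step_approx :: "(real \<Rightarrow> real) \<Rightarrow> real \<Rightarrow> nat \<Rightarrow> complex \<Rightarrow> complex" where
  "step_approx \<phi> \<sigma> K w = of_real (\<phi> 0) +
     (\<Sum>k\<in>{1..K}. of_real (\<phi> (real k * \<sigma>) - \<phi> ((real k - 1) * \<sigma>)) *
        smooth_step ((w - of_real (real k * \<sigma>)) / of_real \<sigma>))"

lemma step_approx_holomorphic: "step_approx \<phi> \<sigma> K holomorphic_on UNIV"
proof -
  have "(\<lambda>w. smooth_step ((w - of_real (real k * \<sigma>)) / of_real \<sigma>)) holomorphic_on UNIV" for k
    by (rule holomorphic_on_compose_gen[OF _ smooth_step_holomorphic, unfolded o_def])
      (auto intro!: holomorphic_intros)
  then show ?thesis
    unfolding step_approx_def[abs_def] by (intro holomorphic_intros) auto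
qed

lemma step_approx_of_real:
  "step_approx \<phi> \<sigma> K (of_real x) = of_real (\<phi> 0 + (\<Sum>k\<in>{1..K}. (\<phi> (real k * \<sigma>) - \<phi> ((real k - 1) * \<sigma>)) *
     ((gauss_primitive_real ((x - real k * \<sigma>) / \<sigma>) / gauss_half_mass + 1) / 2)))"
proof -
  have "smooth_step ((of_real x - of_real (real k * \<sigma>)) / of_real \<sigma>)
      = of_real ((gauss_primitive_real ((x - real k * \<sigma>) / \<sigma>) / gauss_half_mass + 1) / 2)" for k
    using smooth_step_of_real[of "(x - real k * \<sigma>) / \<sigma>"] by (simp only: of_real_diff of_real_divide)
  then show ?thesis
    unfolding step_approx_def by (simp only: of_real_add of_real_sum of_real_mult)
qed

lemma sum_increments_telescope:
  "(\<Sum>k\<in>{1..m}. \<phi> (real k * \<sigma>) - \<phi> ((real k - 1) * \<sigma>)) = \<phi> (real m * \<sigma>) - (\<phi> 0 :: real)"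
  by (induction m) simp_all

lemma lipschitz_increment_le:
  assumes "B \<ge> 0" "\<sigma> > 0" "\<And>x y. 0 \<le> x \<Longrightarrow> 0 \<le> y \<Longrightarrow> \<bar>\<phi> x - \<phi> y\<bar> \<le> B * \<bar>x - y\<bar>" "k \<ge> 1"
  shows "\<bar>\<phi> (real k * \<sigma>) - \<phi> ((real k - 1) * \<sigma>)\<bar> \<le> B * \<sigma>"
  using assms(3)[of "real k * \<sigma>" "(real k - 1) * \<sigma>"] assms by (simp add: algebra_simps)

lemma step_approx_real_error:
  fixes \<phi> :: "real \<Rightarrow> real"
  assumes B: "B \<ge> 0" and \<sigma>: "\<sigma> > 0"
    and lip: "\<And>x y. 0 \<le> x \<Longrightarrow> 0 \<le> y \<Longrightarrow> \<bar>\<phi> x - \<phi> y\<bar> \<le> B * \<bar>x - y\<bar>"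
    and x: "0 \<le> x" "x \<le> real K * \<sigma>"
  shows "\<bar>\<phi> x - Re (step_approx \<phi> \<sigma> K (of_real x))\<bar> \<le> B * \<sigma> * (1 + exp 1 / gauss_half_mass)"
proof -
  have L: "gauss_half_mass > 0" by (rule gauss_half_mass_pos)
  define d where "d k = \<phi> (real k * \<sigma>) - \<phi> ((real k - 1) * \<sigma>)" for k :: nat
  define S where "S k = (gauss_primitive_real ((x - real k * \<sigma>) / \<sigma>) / gauss_half_mass + 1) / 2" for k :: nat
  define m where "m = nat \<lfloor>x / \<sigma>\<rfloor>"
  have m_floor: "real m = of_int \<lfloor>x / \<sigma>\<rfloor>" using x \<sigma> by (simp add: m_def)
  have m: "real m * \<sigma> \<le> x" "x < real m * \<sigma> + \<sigma>"
    using floor_divide_lower[OF \<sigma>, of x] floor_divide_upper[OF \<sigma>, of x]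
    unfolding m_floor by (simp_all add: algebra_simps)
  have mK: "m \<le> K" using x \<sigma> by (auto simp: m_def nat_le_iff floor_le_iff field_simps)
  have step: "(if 0 \<le> (x - real k * \<sigma>) / \<sigma> then 1 else 0) = (if k \<le> m then 1 else (0::real))" for k
  proof -
    have "0 \<le> (x - real k * \<sigma>) / \<sigma> \<longleftrightarrow> real k \<le> x / \<sigma>" using \<sigma> by (simp add: field_simps)
    also have "\<dots> \<longleftrightarrow> k \<le> m" using x \<sigma> by (simp add: m_def le_nat_iff le_floor_iff)
    finally show ?thesis by simp
  qed
  have sum_steps: "(\<Sum>k\<in>{1..K}. d k * (if k \<le> m then 1 else 0)) = \<phi> (real m * \<sigma>) - \<phi> 0"
  proof -
    have "(\<Sum>k\<in>{1..K}. d k * (if k \<le> m then 1 else 0)) = (\<Sum>k\<in>{1..K}. if k \<le> m then d k else 0)"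
      by (rule sum.cong) auto
    also have "\<dots> = (\<Sum>k\<in>{1..K} \<inter> {k. k \<le> m}. d k)"
      by (simp add: sum.inter_restrict)
    also have "{1..K} \<inter> {k. k \<le> m} = {1..m}" using mK by auto
    finally show ?thesis unfolding d_def sum_increments_telescope .
  qed
  have "\<bar>\<Sum>k\<in>{1..K}. d k * ((if k \<le> m then 1 else 0) - S k)\<bar>
      \<le> (\<Sum>k\<in>{1..K}. B * \<sigma> * (exp 1 / (4 * gauss_half_mass) * exp (- 2 * \<bar>x / \<sigma> - real k\<bar>)))"
  proof (rule order_trans[OF sum_abs sum_mono])
    fix k assume k: "k \<in> {1..K}"
    have "(x - real k * \<sigma>) / \<sigma> = x / \<sigma> - real k" using \<sigma> by (simp add: field_simps)
    then have "\<bar>(if k \<le> m then 1 else 0) - S k\<bar> \<le> exp 1 / (4 * gauss_half_mass) * exp (- 2 * \<bar>x / \<sigma> - real k\<bar>)"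
      using smooth_step_real_error[of "(x - real k * \<sigma>) / \<sigma>"] unfolding S_def step
      by (simp add: abs_minus_commute)
    then show "\<bar>d k * ((if k \<le> m then 1 else 0) - S k)\<bar>
        \<le> B * \<sigma> * (exp 1 / (4 * gauss_half_mass) * exp (- 2 * \<bar>x / \<sigma> - real k\<bar>))"
      unfolding abs_mult d_def using lipschitz_increment_le[OF B \<sigma> lip] k B \<sigma> by (intro mult_mono) auto
  qed
  also have "\<dots> = B * \<sigma> * (exp 1 / (4 * gauss_half_mass)) * (\<Sum>k\<in>{1..K}. exp (- 2 * \<bar>x / \<sigma> - real k\<bar>))"
    by (simp add: sum_distrib_left mult.assoc)
  also have "\<dots> \<le> B * \<sigma> * (exp 1 / (4 * gauss_half_mass)) * 4"
    using B \<sigma> L by (intro mult_left_mono sum_exp_dist_le) auto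
  finally have smoothing: "\<bar>\<Sum>k\<in>{1..K}. d k * ((if k \<le> m then 1 else 0) - S k)\<bar> \<le> B * \<sigma> * (exp 1 / gauss_half_mass)"
    by simp
  have "\<bar>\<phi> x - \<phi> (real m * \<sigma>)\<bar> \<le> B * \<bar>x - real m * \<sigma>\<bar>"
    using x \<sigma> by (intro lip) auto
  also have "\<dots> \<le> B * \<sigma>" using m B by (intro mult_left_mono) auto
  finally have grid: "\<bar>\<phi> x - \<phi> (real m * \<sigma>)\<bar> \<le> B * \<sigma>" .
  have "Re (step_approx \<phi> \<sigma> K (of_real x)) = \<phi> 0 + (\<Sum>k\<in>{1..K}. d k * S k)"
    unfolding step_approx_of_real d_def S_def by simp
  then have "\<phi> x - Re (step_approx \<phi> \<sigma> K (of_real x))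
      = (\<phi> x - \<phi> (real m * \<sigma>)) + (\<Sum>k\<in>{1..K}. d k * ((if k \<le> m then 1 else 0) - S k))"
    using sum_steps by (simp add: right_diff_distrib sum_subtractf)
  then show ?thesis using grid smoothing by (simp add: algebra_simps)
qed

lemma Im_step_approx_le:
  fixes \<phi> :: "real \<Rightarrow> real"
  assumes B: "B \<ge> 0" and \<sigma>: "\<sigma> > 0"
    and lip: "\<And>x y. 0 \<le> x \<Longrightarrow> 0 \<le> y \<Longrightarrow> \<bar>\<phi> x - \<phi> y\<bar> \<le> B * \<bar>x - y\<bar>"
    and w: "\<bar>Im w\<bar> \<le> H"
  shows "Im (step_approx \<phi> \<sigma> K w) \<le> B * \<sigma> * ((H / \<sigma>) * exp ((H / \<sigma>)\<^sup>2) * exp 1 / (2 * gauss_half_mass)) * 4"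
proof -
  have L: "gauss_half_mass > 0" by (rule gauss_half_mass_pos)
  define Y where "Y = H / \<sigma>"
  define v where "v = Re w / \<sigma>"
  define c where "c = Y * exp (Y\<^sup>2) * exp 1 / (2 * gauss_half_mass)"
  have shifted: "(w - of_real (real k * \<sigma>)) / of_real \<sigma> = Complex (v - real k) (Im w / \<sigma>)" for k
    using \<sigma> by (simp add: complex_eq_iff v_def Re_divide_of_real Im_divide_of_real diff_divide_distrib)
  have Y: "\<bar>Im w / \<sigma>\<bar> \<le> Y" using w \<sigma> by (simp add: Y_def abs_divide divide_right_mono)
  then have Y0: "0 \<le> Y" using abs_ge_zero order_trans by blast
  have Im_step: "\<bar>Im (smooth_step (Complex (v - real k) (Im w / \<sigma>)))\<bar> \<le> c * exp (- 2 * \<bar>v - real k\<bar>)" for k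
  proof -
    have "\<bar>Im w / \<sigma>\<bar>\<^sup>2 \<le> Y\<^sup>2" by (rule power_mono[OF Y abs_ge_zero])
    then have "exp ((Im w / \<sigma>)\<^sup>2) \<le> exp (Y\<^sup>2)" by (simp only: power2_abs exp_le_cancel_iff)
    then have "\<bar>Im w / \<sigma>\<bar> * exp ((Im w / \<sigma>)\<^sup>2) \<le> Y * exp (Y\<^sup>2)"
      using Y Y0 by (intro mult_mono) auto
    then have "\<bar>Im w / \<sigma>\<bar> * exp ((Im w / \<sigma>)\<^sup>2) * exp 1 * exp (- 2 * \<bar>v - real k\<bar>) / (2 * gauss_half_mass)
        \<le> Y * exp (Y\<^sup>2) * exp 1 * exp (- 2 * \<bar>v - real k\<bar>) / (2 * gauss_half_mass)"
      using L by (intro divide_right_mono mult_right_mono) auto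
    from order_trans[OF abs_Im_smooth_step_le this] show ?thesis
      by (simp add: c_def mult_ac)
  qed
  have "Im (step_approx \<phi> \<sigma> K w)
      = (\<Sum>k\<in>{1..K}. (\<phi> (real k * \<sigma>) - \<phi> ((real k - 1) * \<sigma>)) * Im (smooth_step (Complex (v - real k) (Im w / \<sigma>))))"
    unfolding step_approx_def shifted by (simp add: Im_sum)
  also have "\<dots> \<le> (\<Sum>k\<in>{1..K}. B * \<sigma> * (c * exp (- 2 * \<bar>v - real k\<bar>)))"
  proof (rule sum_mono)
    fix k assume "k \<in> {1..K}"
    have "(\<phi> (real k * \<sigma>) - \<phi> ((real k - 1) * \<sigma>)) * Im (smooth_step (Complex (v - real k) (Im w / \<sigma>)))
        \<le> \<bar>\<phi> (real k * \<sigma>) - \<phi> ((real k - 1) * \<sigma>)\<bar> * \<bar>Im (smooth_step (Complex (v - real k) (Im w / \<sigma>)))\<bar>"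
      by (simp only: abs_mult[symmetric] abs_ge_self)
    also have "\<dots> \<le> B * \<sigma> * (c * exp (- 2 * \<bar>v - real k\<bar>))"
      using lipschitz_increment_le[OF B \<sigma> lip, of k] Im_step[of k] B \<sigma> \<open>k \<in> {1..K}\<close>
      by (intro mult_mono) auto
    finally show "(\<phi> (real k * \<sigma>) - \<phi> ((real k - 1) * \<sigma>)) * Im (smooth_step (Complex (v - real k) (Im w / \<sigma>)))
        \<le> B * \<sigma> * (c * exp (- 2 * \<bar>v - real k\<bar>))" .
  qed
  also have "\<dots> = B * \<sigma> * c * (\<Sum>k\<in>{1..K}. exp (- 2 * \<bar>v - real k\<bar>))"
    by (simp add: sum_distrib_left mult.assoc)
  also have "\<dots> \<le> B * \<sigma> * c * 4"
    using B \<sigma> L Y0 by (intro mult_left_mono sum_exp_dist_le) (auto simp: c_def)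
  finally show ?thesis by (simp add: c_def Y_def)
qed

lemma lipschitz_entire_approximation:
  assumes B: "B \<ge> 0" and \<epsilon>: "\<epsilon> > 0"
  obtains M where "\<And>\<phi> X. (\<And>x y. 0 \<le> x \<Longrightarrow> 0 \<le> y \<Longrightarrow> \<bar>\<phi> x - \<phi> y\<bar> \<le> B * \<bar>x - y\<bar>) \<Longrightarrow>
    \<exists>\<Phi>. \<Phi> holomorphic_on UNIV \<and> (\<forall>x. Im (\<Phi> (of_real x)) = 0) \<and>
      (\<forall>x\<in>{0..X}. \<bar>\<phi> x - Re (\<Phi> (of_real x))\<bar> \<le> \<epsilon>) \<and> (\<forall>w. \<bar>Im w\<bar> \<le> H \<longrightarrow> Im (\<Phi> w) \<le> M)"
proof -
  have B1: "B + 1 > 0" and L1: "1 + exp 1 / gauss_half_mass > 0"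
    using B gauss_half_mass_pos by (auto simp: add_pos_pos)
  define C where "C = (B + 1) * (1 + exp 1 / gauss_half_mass)"
  have C: "C > 0" unfolding C_def using B1 L1 by simp
  define \<sigma> where "\<sigma> = \<epsilon> / C"
  have \<sigma>: "\<sigma> > 0" using \<epsilon> C by (simp add: \<sigma>_def)
  have error: "B * \<sigma> * (1 + exp 1 / gauss_half_mass) \<le> \<epsilon>"
  proof -
    have "B * \<sigma> * (1 + exp 1 / gauss_half_mass) \<le> (B + 1) * \<sigma> * (1 + exp 1 / gauss_half_mass)"
      using \<sigma> gauss_half_mass_pos by (intro mult_right_mono) auto
    also have "\<dots> = \<epsilon>" using B1 L1 by (simp add: C_def \<sigma>_def)
    finally show ?thesis .
  qed
  show ?thesis
  proof (rule that, intro exI conjI allI impI ballI)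
    fix \<phi> :: "real \<Rightarrow> real" and X :: real
    assume lip: "\<And>x y. 0 \<le> x \<Longrightarrow> 0 \<le> y \<Longrightarrow> \<bar>\<phi> x - \<phi> y\<bar> \<le> B * \<bar>x - y\<bar>"
    define K where "K = nat \<lceil>X / \<sigma>\<rceil>"
    have XK: "X \<le> real K * \<sigma>"
      using \<sigma> by (simp add: K_def pos_divide_le_eq[symmetric]) linarith
    show "step_approx \<phi> \<sigma> K holomorphic_on UNIV" by (rule step_approx_holomorphic)
    show "Im (step_approx \<phi> \<sigma> K (of_real x)) = 0" for x by (simp only: step_approx_of_real Im_complex_of_real)
    show "\<bar>\<phi> x - Re (step_approx \<phi> \<sigma> K (of_real x))\<bar> \<le> \<epsilon>" if "x \<in> {0..X}" for x
      using step_approx_real_error[OF B \<sigma> lip, of x K] that XK error by auto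
    show "Im (step_approx \<phi> \<sigma> K w) \<le> B * \<sigma> * ((H / \<sigma>) * exp ((H / \<sigma>)\<^sup>2) * exp 1 / (2 * gauss_half_mass)) * 4"
      if "\<bar>Im w\<bar> \<le> H" for w
      by (rule Im_step_approx_le[OF B \<sigma> lip that])
  qed
qed

section \<open>Test functions\<close>

lemma exp_minus_of_real: "exp (- complex_of_real x) = of_real (exp (- x))"
  by (simp flip: exp_of_real)

lemma norm_Bloch_radial_deriv_le:
  fixes h :: "complex \<Rightarrow> complex"
  assumes Bh: "\<And>z. z \<in> ball 0 1 \<Longrightarrow> (1 - norm z ^ 2) * norm (deriv h z) \<le> B"
    and \<zeta>: "norm \<zeta> = 1" and u: "0 \<le> u"
  shows "\<zeta> * (1 - exp (- of_real u)) \<in> ball 0 1"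
    and "norm (deriv h (\<zeta> * (1 - exp (- of_real u))) * (\<zeta> * exp (- of_real u))) \<le> B"
proof -
  define r where "r = 1 - exp (- u)"
  have r: "0 \<le> r" "r < 1" using u by (auto simp: r_def)
  have point: "\<zeta> * (1 - exp (- of_real u)) = of_real r * \<zeta>"
    by (simp add: r_def exp_minus_of_real mult.commute)
  show in_ball: "\<zeta> * (1 - exp (- of_real u)) \<in> ball 0 1"
    unfolding point using r by (intro radial_in_ball[OF \<zeta>, of r r]) auto
  have "1 - r\<^sup>2 \<ge> exp (- u)"
    using r by (simp add: r_def power2_eq_square algebra_simps mult_left_le_one_le)
  then have "exp (- u) * norm (deriv h (of_real r * \<zeta>)) \<le> (1 - norm (of_real r * \<zeta>) ^ 2) * norm (deriv h (of_real r * \<zeta>))"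
    using r \<zeta> by (intro mult_right_mono) (auto simp: norm_mult)
  also have "\<dots> \<le> B" using Bh in_ball point by simp
  finally show "norm (deriv h (\<zeta> * (1 - exp (- of_real u))) * (\<zeta> * exp (- of_real u))) \<le> B"
    unfolding point using \<zeta> by (simp add: norm_mult exp_minus_of_real mult.commute)
qed

text \<open>The substitution \<open>r = 1 - exp (- x)\<close> has \<open>dr/dx = 1 - r \<le> 1 - r\<^sup>2\<close>, so it turns the Bloch
  bound on \<open>h'\<close> into a Lipschitz bound along each radius.\<close>

lemma Bloch_radial_lipschitz:
  fixes h :: "complex \<Rightarrow> complex"
  assumes holh: "h holomorphic_on ball 0 1"
    and Bh: "\<And>z. z \<in> ball 0 1 \<Longrightarrow> (1 - norm z ^ 2) * norm (deriv h z) \<le> B"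
    and \<zeta>: "norm \<zeta> = 1" and x: "0 \<le> x" and y: "0 \<le> y"
  shows "norm (h (of_real (1 - exp (- x)) * \<zeta>) - h (of_real (1 - exp (- y)) * \<zeta>)) \<le> B * \<bar>x - y\<bar>"
proof -
  define q where "q s = h (\<zeta> * (1 - exp (- s)))" for s :: complex
  define S where "S = closed_segment (complex_of_real x) (of_real y)"
  have S_real: "\<exists>u\<ge>0. s = of_real u" if "s \<in> S" for s
  proof -
    have "\<exists>t. 0 \<le> t \<and> t \<le> 1 \<and> s = (1 - t) *\<^sub>R complex_of_real x + t *\<^sub>R of_real y"
      using that unfolding S_def in_segment by simp
    then obtain t where t: "0 \<le> t" "t \<le> 1" and s: "s = (1 - t) *\<^sub>R complex_of_real x + t *\<^sub>R of_real y"
      by blast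
    then have "s = of_real ((1 - t) * x + t * y)" by (simp add: scaleR_conv_of_real)
    then show ?thesis using t x y by (intro exI[of _ "(1 - t) * x + t * y"]) simp
  qed
  have "norm (q (of_real x) - q (of_real y)) \<le> B * norm (complex_of_real x - of_real y)"
  proof (rule field_differentiable_bound)
    fix s assume "s \<in> S"
    then obtain u where u: "0 \<le> u" and s: "s = of_real u" using S_real by blast
    note bound = norm_Bloch_radial_deriv_le[OF Bh \<zeta> u]
    have "(h has_field_derivative deriv h (\<zeta> * (1 - exp (- s)))) (at (\<zeta> * (1 - exp (- s))))"
      using holomorphic_derivI[OF holh open_ball bound(1)] s by simp
    moreover have "((\<lambda>s. \<zeta> * (1 - exp (- s))) has_field_derivative \<zeta> * exp (- s)) (at s)"
      by (auto intro!: derivative_eq_intros)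
    ultimately have "(q has_field_derivative deriv h (\<zeta> * (1 - exp (- s))) * (\<zeta> * exp (- s))) (at s)"
      unfolding q_def[abs_def] by (rule DERIV_chain2)
    then show "(q has_field_derivative deriv h (\<zeta> * (1 - exp (- s))) * (\<zeta> * exp (- s))) (at s within S)"
      by (rule has_field_derivative_at_within)
    show "norm (deriv h (\<zeta> * (1 - exp (- s))) * (\<zeta> * exp (- s))) \<le> B"
      using bound(2) s by simp
  qed (auto simp: S_def)
  moreover have "q (of_real x) = h (of_real (1 - exp (- x)) * \<zeta>)" "q (of_real y) = h (of_real (1 - exp (- y)) * \<zeta>)"
    by (simp_all add: q_def exp_minus_of_real mult.commute)
  moreover have "norm (complex_of_real x - of_real y) = \<bar>x - y\<bar>"
    unfolding of_real_diff[symmetric] norm_of_real ..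
  ultimately show ?thesis by simp
qed

definition disc_log :: "complex \<Rightarrow> complex \<Rightarrow> complex" where
  "disc_log \<zeta> z = - Ln (1 - cnj \<zeta> * z)"

text \<open>On the radius \<open>z = r \<zeta>\<close> one has \<open>disc_log \<zeta> z = - ln (1 - r)\<close>, so there
  \<open>test_deriv \<Phi> a \<zeta> z = (1 - r) powr (- (a + 1)) * exp (- \<i> * \<Phi> (- ln (1 - r)))\<close>: the real part of \<open>\<Phi>\<close>
  is the phase that will cancel the argument of \<open>g\<close>.\<close>

definition test_deriv :: "(complex \<Rightarrow> complex) \<Rightarrow> real \<Rightarrow> complex \<Rightarrow> complex \<Rightarrow> complex" where
  "test_deriv \<Phi> a \<zeta> z = exp (of_real (a + 1) * disc_log \<zeta> z - \<i> * \<Phi> (disc_log \<zeta> z))"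

lemma one_minus_cnj_mult:
  assumes \<zeta>: "norm \<zeta> = 1" and w: "w \<in> ball 0 1"
  shows "Re (1 - cnj \<zeta> * w) > 0" and "norm (1 - cnj \<zeta> * w) \<ge> 1 - norm w"
proof -
  have norm_w: "norm (cnj \<zeta> * w) = norm w" using \<zeta> by (simp add: norm_mult)
  have "Re (cnj \<zeta> * w) < 1"
    using complex_Re_le_cmod[of "cnj \<zeta> * w"] norm_w w by (metis le_less_trans mem_ball_0)
  then show "Re (1 - cnj \<zeta> * w) > 0"
    by (simp only: minus_complex.sel one_complex.sel)
  show "norm (1 - cnj \<zeta> * w) \<ge> 1 - norm w"
    using norm_triangle_ineq2[of 1 "cnj \<zeta> * w"] norm_w by simp
qed

lemma disc_log_holomorphic:
  assumes "norm \<zeta> = 1"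
  shows "disc_log \<zeta> holomorphic_on ball 0 1"
proof -
  have "(\<lambda>w. Ln (1 - cnj \<zeta> * w)) holomorphic_on ball 0 1"
  proof (rule holomorphic_on_Ln')
    fix w :: complex assume "w \<in> ball 0 1"
    then show "1 - cnj \<zeta> * w \<notin> \<real>\<^sub>\<le>\<^sub>0"
      using one_minus_cnj_mult(1)[OF assms] by (metis complex_nonpos_Reals_iff not_le)
  qed (intro holomorphic_intros)
  then show ?thesis
    unfolding disc_log_def[abs_def] by (rule holomorphic_on_minus)
qed

lemma test_deriv_holomorphic:
  assumes "norm \<zeta> = 1" and "\<Phi> holomorphic_on UNIV"
  shows "test_deriv \<Phi> a \<zeta> holomorphic_on ball 0 1"
proof -
  have "(\<Phi> \<circ> disc_log \<zeta>) holomorphic_on ball 0 1"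
    using disc_log_holomorphic[OF assms(1)] assms(2) by (rule holomorphic_on_compose_gen) auto
  then show ?thesis
    unfolding test_deriv_def[abs_def] o_def using disc_log_holomorphic[OF assms(1)]
    by (intro holomorphic_intros)
qed

lemma norm_test_deriv_le:
  assumes \<zeta>: "norm \<zeta> = 1" and a: "a > 0" and w: "w \<in> ball 0 1"
    and M: "\<And>u. \<bar>Im u\<bar> \<le> pi / 2 \<Longrightarrow> Im (\<Phi> u) \<le> M"
  shows "norm (test_deriv \<Phi> a \<zeta> w) \<le> exp M * (1 - norm w) powr (- (a + 1))"
proof -
  define n where "n = norm (1 - cnj \<zeta> * w)"
  have n: "n \<ge> 1 - norm w" "1 - norm w > 0" using one_minus_cnj_mult[OF \<zeta> w] w by (auto simp: n_def)
  have "1 - cnj \<zeta> * w \<noteq> 0" using one_minus_cnj_mult(1)[OF \<zeta> w] by (metis less_irrefl zero_complex.sel(1))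
  then have Re_log: "Re (disc_log \<zeta> w) = - ln n" by (simp add: disc_log_def n_def)
  have "\<bar>Im (disc_log \<zeta> w)\<bar> < pi / 2"
    using Re_Ln_pos_lt_imp[OF one_minus_cnj_mult(1)[OF \<zeta> w]] by (simp add: disc_log_def)
  then have Im_\<Phi>: "exp (Im (\<Phi> (disc_log \<zeta> w))) \<le> exp M" using M by simp
  have "norm (test_deriv \<Phi> a \<zeta> w) = exp (- (a + 1) * ln n) * exp (Im (\<Phi> (disc_log \<zeta> w)))"
    by (simp add: test_deriv_def Re_log algebra_simps flip: exp_add)
  also have "exp (- (a + 1) * ln n) = n powr (- (a + 1))" using n by (simp add: powr_def)
  also have "n powr (- (a + 1)) * exp (Im (\<Phi> (disc_log \<zeta> w))) \<le> (1 - norm w) powr (- (a + 1)) * exp M"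
    using a n Im_\<Phi> by (intro mult_mono powr_mono2') auto
  finally show ?thesis by (simp add: mult.commute)
qed

lemma disc_log_radial:
  assumes \<zeta>: "norm \<zeta> = 1" and r: "0 \<le> r" "r < 1"
  shows "disc_log \<zeta> (of_real r * \<zeta>) = of_real (- ln (1 - r))"
proof -
  have "cnj \<zeta> * (of_real r * \<zeta>) = of_real r * (cnj \<zeta> * \<zeta>)" by (simp only: mult.assoc mult.left_commute)
  also have "\<dots> = of_real r" using complex_norm_square[of \<zeta>] \<zeta> by (simp add: mult.commute)
  finally have radial: "1 - cnj \<zeta> * (of_real r * \<zeta>) = of_real (1 - r)" by simp
  show ?thesis
    unfolding disc_log_def radial using Ln_of_real[of "1 - r"] r by simp
qed

lemma Re_test_deriv_mult_ge:
  assumes \<zeta>: "norm \<zeta> = 1" and r: "0 \<le> r" "r < 1" and a: "a \<ge> 0"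
    and real: "Im (\<Phi> (of_real (- ln (1 - r)))) = 0"
    and phase: "\<bar>Im c - Re (\<Phi> (of_real (- ln (1 - r))))\<bar> \<le> pi / 3"
  shows "1 / 2 * (norm (exp c) / (1 - r\<^sup>2) powr (a + 1)) \<le> Re (test_deriv \<Phi> a \<zeta> (of_real r * \<zeta>) * exp c)"
proof -
  define x where "x = - ln (1 - r)"
  define p where "p = Re (\<Phi> (of_real x))"
  have "\<Phi> (of_real x) = of_real p" using real by (simp add: complex_eq_iff p_def x_def)
  then have "test_deriv \<Phi> a \<zeta> (of_real r * \<zeta>) * exp c = exp (of_real ((a + 1) * x) - \<i> * of_real p + c)"
    by (simp add: test_deriv_def disc_log_radial[OF \<zeta> r] x_def[symmetric] exp_add)
  then have "Re (test_deriv \<Phi> a \<zeta> (of_real r * \<zeta>) * exp c) = exp ((a + 1) * x + Re c) * cos (Im c - p)"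
    by (simp add: Re_exp)
  also have "exp ((a + 1) * x + Re c) = (1 - r) powr (- (a + 1)) * exp (Re c)"
    using r by (simp add: powr_def x_def algebra_simps flip: exp_add)
  finally have Re_eq: "Re (test_deriv \<Phi> a \<zeta> (of_real r * \<zeta>) * exp c) = (1 - r) powr (- (a + 1)) * exp (Re c) * cos (Im c - p)" .
  have "cos (pi / 3) \<le> cos \<bar>Im c - p\<bar>"
    using phase by (intro cos_monotone_0_pi_le) (auto simp: p_def x_def)
  then have cos: "1 / 2 \<le> cos (Im c - p)" by (simp add: cos_60)
  have "(1 - r) powr (a + 1) \<le> (1 - r\<^sup>2) powr (a + 1)"
    using r a by (intro powr_mono2) (auto simp: power2_eq_square mult_left_le_one_le)
  moreover have "0 < 1 - r\<^sup>2" using r by (simp add: power_less_one_iff abs_less_iff)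
  then have "(1 - r) powr (a + 1) > 0" "(1 - r\<^sup>2) powr (a + 1) > 0"
    using r by auto
  ultimately have "1 / (1 - r\<^sup>2) powr (a + 1) \<le> 1 / (1 - r) powr (a + 1)"
    by (intro divide_left_mono mult_pos_pos) auto
  then have pw: "1 / (1 - r\<^sup>2) powr (a + 1) \<le> (1 - r) powr (- (a + 1))"
    by (simp only: powr_minus_divide)
  have "1 / 2 * (norm (exp c) / (1 - r\<^sup>2) powr (a + 1)) = exp (Re c) * (1 / (1 - r\<^sup>2) powr (a + 1)) * (1 / 2)"
    by simp
  also have "\<dots> \<le> exp (Re c) * (1 - r) powr (- (a + 1)) * cos (Im c - p)"
    using pw cos by (intro mult_mono mult_left_mono) auto
  finally show ?thesis
    unfolding Re_eq by (simp only: mult_ac)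
qed

lemma has_integral_one_minus_powr:
  fixes a t :: real
  assumes a: "a > 0" and t: "0 \<le> t" "t < 1"
  shows "((\<lambda>r. (1 - r) powr (- (a + 1))) has_integral ((1 - t) powr (- a) / a - 1 / a)) {0..t}"
proof -
  have antiderivative: "((\<lambda>r. (1 - r) powr (- a) / a) has_real_derivative (1 - r) powr (- (a + 1))) (at r)"
    if r: "r < 1" for r
  proof -
    have "((\<lambda>r. 1 - r) has_real_derivative - 1) (at r)" "((\<lambda>r. - a) has_real_derivative 0) (at r)"
      by (auto intro!: derivative_eq_intros)
    from DERIV_powr[OF this(1) _ this(2)] r
    have "((\<lambda>r. (1 - r) powr (- a) / a) has_real_derivative
        (1 - r) powr (- a) * (0 * ln (1 - r) + (- 1) * (- a) / (1 - r)) / a) (at r)"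
      by (intro DERIV_cdivide) simp
    moreover have "(1 - r) powr (- a) * (0 * ln (1 - r) + (- 1) * (- a) / (1 - r)) / a = (1 - r) powr (- (a + 1))"
    proof -
      have "(1 - r) powr (- (a + 1)) = (1 - r) powr (- a) * inverse (1 - r)"
        using powr_add[of "1 - r" "- a" "- 1"] r by (simp add: powr_minus)
      then show ?thesis
        using a r by (simp only:) (simp add: field_simps)
    qed
    ultimately show ?thesis by simp
  qed
  have "((\<lambda>r. (1 - r) powr (- (a + 1))) has_integral ((1 - t) powr (- a) / a - (1 - 0) powr (- a) / a)) {0..t}"
  proof (rule fundamental_theorem_of_calculus[OF t(1)])
    fix r assume "r \<in> {0..t}"
    with antiderivative[of r] t show "((\<lambda>r. (1 - r) powr (- a) / a) has_vector_derivative (1 - r) powr (- (a + 1))) (at r within {0..t})"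
      by (simp add: has_real_derivative_iff_has_vector_derivative[symmetric] has_field_derivative_at_within)
  qed
  then show ?thesis by simp
qed

lemma norm_segment_primitive_le:
  fixes F :: "complex \<Rightarrow> complex"
  assumes a: "a > 0" and contF: "continuous_on (ball 0 1) F" and E: "E \<ge> 0"
    and F_bound: "\<And>w. w \<in> ball 0 1 \<Longrightarrow> norm (F w) \<le> E * (1 - norm w) powr (- (a + 1))"
    and z: "z \<in> ball 0 1"
  shows "norm (contour_integral (linepath 0 z) F) \<le> E * (1 - norm z) powr (- a) / a"
proof -
  define t where "t = norm z"
  obtain \<eta> where \<eta>: "norm \<eta> = 1" and z_eq: "z = of_real t * \<eta>"
    using polar_decomposition unfolding t_def by blast
  have t: "0 \<le> t" "t < 1" using z by (auto simp: t_def)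
  have I: "((\<lambda>r. (1 - r) powr (- (a + 1))) has_integral ((1 - t) powr (- a) / a - 1 / a)) {0..t}"
    using has_integral_one_minus_powr[OF a t] by simp
  have "norm (contour_integral (linepath 0 z) F) \<le> integral {0..t} (\<lambda>r. norm (F (of_real r * \<eta>)))"
    unfolding z_eq by (rule norm_contour_integral_radial_le[OF contF t \<eta>])
  also have "\<dots> \<le> integral {0..t} (\<lambda>r. E * (1 - r) powr (- (a + 1)))"
  proof (rule integral_le)
    show "(\<lambda>r. norm (F (of_real r * \<eta>))) integrable_on {0..t}"
      using continuous_on_radial[OF contF t(2) \<eta>] by (intro integrable_continuous_interval continuous_intros)
    show "(\<lambda>r. E * (1 - r) powr (- (a + 1))) integrable_on {0..t}"
      using I by (intro integrable_on_mult_right) blast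
    fix r assume r: "r \<in> {0..t}"
    then show "norm (F (of_real r * \<eta>)) \<le> E * (1 - r) powr (- (a + 1))"
      using F_bound[OF radial_in_ball[OF \<eta> r t(2)]] \<eta> by (simp add: norm_mult)
  qed
  also have "\<dots> = E * ((1 - t) powr (- a) / a - 1 / a)"
    using I by (simp add: has_integral_iff)
  also have "\<dots> \<le> E * (1 - t) powr (- a) / a" using E a by (simp add: field_simps)
  finally show ?thesis by (simp add: t_def)
qed

lemma segment_primitive_in_Hinf_weighted:
  fixes F :: "complex \<Rightarrow> complex"
  assumes a: "a > 0" and holF: "F holomorphic_on ball 0 1" and E: "E \<ge> 0"
    and F_bound: "\<And>w. w \<in> ball 0 1 \<Longrightarrow> norm (F w) \<le> E * (1 - norm w) powr (- (a + 1))"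
  shows "(\<lambda>z. contour_integral (linepath 0 z) F) \<in> Hinf_weighted a"
    and "Hinf_norm a (\<lambda>z. contour_integral (linepath 0 z) F) \<le> 2 powr a * E / a"
proof -
  have weighted: "(1 - norm z ^ 2) powr a * norm (contour_integral (linepath 0 z) F) \<le> 2 powr a * E / a"
    if z: "z \<in> ball 0 1" for z
  proof -
    define t where "t = norm z"
    have t: "0 \<le> t" "t < 1" using z by (auto simp: t_def)
    have "1 - t\<^sup>2 = (1 - t) * (1 + t)" by (simp add: power2_eq_square algebra_simps)
    moreover have "(1 - t) * (1 + t) \<le> (1 - t) * 2" using t by (intro mult_left_mono) auto
    ultimately have "1 - t\<^sup>2 \<le> 2 * (1 - t)" "0 \<le> 1 - t\<^sup>2"
      using t by auto
    then have "(1 - norm z ^ 2) powr a \<le> 2 powr a * (1 - t) powr a"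
      using a t by (simp add: t_def powr_mono2 flip: powr_mult)
    moreover have "norm (contour_integral (linepath 0 z) F) \<le> E * (1 - t) powr (- a) / a"
      unfolding t_def using holomorphic_on_imp_continuous_on[OF holF]
      by (rule norm_segment_primitive_le[OF a _ E F_bound z])
    ultimately have "(1 - norm z ^ 2) powr a * norm (contour_integral (linepath 0 z) F)
        \<le> (2 powr a * (1 - t) powr a) * (E * (1 - t) powr (- a) / a)"
      by (intro mult_mono) auto
    also have "\<dots> = 2 powr a * E / a"
      using t by (simp add: field_simps flip: powr_add)
    finally show ?thesis .
  qed
  show "(\<lambda>z. contour_integral (linepath 0 z) F) \<in> Hinf_weighted a"
    by (rule Hinf_weightedI[OF ball_segment_primitive_holomorphic[OF holF] weighted])
  show "Hinf_norm a (\<lambda>z. contour_integral (linepath 0 z) F) \<le> 2 powr a * E / a"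
    by (rule Hinf_norm_le[OF weighted])
qed

lemma radial_lower_bound:
  fixes g h f \<Phi> :: "complex \<Rightarrow> complex"
  assumes a: "a > 0" and \<zeta>: "norm \<zeta> = 1" and t: "0 \<le> t" "t < 1"
    and holg: "g holomorphic_on ball 0 1" and g_exp: "\<And>z. z \<in> ball 0 1 \<Longrightarrow> exp (h z) = g z"
    and hol\<Phi>: "\<Phi> holomorphic_on UNIV" and real\<Phi>: "\<And>x. Im (\<Phi> (of_real x)) = 0"
    and phase: "\<And>r. r \<in> {0..t} \<Longrightarrow> \<bar>Im (h (of_real r * \<zeta>)) - Re (\<Phi> (of_real (- ln (1 - r))))\<bar> \<le> pi / 3"
    and deriv_f: "\<And>w. w \<in> ball 0 1 \<Longrightarrow> deriv f w = test_deriv \<Phi> a \<zeta> w"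
  shows "weighted_radial_integral g a t \<zeta> \<le> 2 * norm (S_op g f (of_real t * \<zeta>))"
proof -
  define G where "G w = test_deriv \<Phi> a \<zeta> w * g w" for w
  have contG: "continuous_on (ball 0 1) G"
    unfolding G_def using test_deriv_holomorphic[OF \<zeta> hol\<Phi>] holg
    by (intro holomorphic_on_imp_continuous_on holomorphic_intros)
  have contg: "continuous_on (ball 0 1) g" using holg by (rule holomorphic_on_imp_continuous_on)
  have "closed_segment 0 (of_real t * \<zeta>) \<subseteq> ball 0 1"
    using radial_in_ball[OF \<zeta>, of t t] t by (simp add: closed_segment_subset)
  then have "S_op g f (of_real t * \<zeta>) = contour_integral (linepath 0 (of_real t * \<zeta>)) G"
    unfolding S_op_def by (intro contour_integral_cong) (auto simp: deriv_f G_def)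
  also have "\<dots> = \<zeta> * integral {0..t} (\<lambda>r. G (of_real r * \<zeta>))"
    by (rule contour_integral_radial[OF contG t \<zeta>])
  finally have S: "norm (S_op g f (of_real t * \<zeta>)) = norm (integral {0..t} (\<lambda>r. G (of_real r * \<zeta>)))"
    using \<zeta> by (simp add: norm_mult)
  have "((\<lambda>r. G (of_real r * \<zeta>)) has_integral integral {0..t} (\<lambda>r. G (of_real r * \<zeta>))) {0..t}"
    using continuous_on_radial[OF contG t(2) \<zeta>] by (intro integrable_integral integrable_continuous_interval)
  from has_integral_Re[OF this]
  have Re_G: "((\<lambda>r. Re (G (of_real r * \<zeta>))) has_integral Re (integral {0..t} (\<lambda>r. G (of_real r * \<zeta>)))) {0..t}"
    by simp
  have "integral {0..t} (\<lambda>r. 1 / 2 * (norm (g (of_real r * \<zeta>)) / (1 - r\<^sup>2) powr (a + 1)))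
      \<le> Re (integral {0..t} (\<lambda>r. G (of_real r * \<zeta>)))"
  proof (rule has_integral_le[OF integrable_integral Re_G])
    show "(\<lambda>r. 1 / 2 * (norm (g (of_real r * \<zeta>)) / (1 - r\<^sup>2) powr (a + 1))) integrable_on {0..t}"
      using weighted_radial_integrand_continuous[OF contg t(2) \<zeta>]
      by (intro integrable_continuous_interval continuous_on_mult_left)
    fix r assume r: "r \<in> {0..t}"
    then have "g (of_real r * \<zeta>) = exp (h (of_real r * \<zeta>))"
      using g_exp radial_in_ball[OF \<zeta> r t(2)] by simp
    moreover have "1 / 2 * (norm (exp (h (of_real r * \<zeta>))) / (1 - r\<^sup>2) powr (a + 1))
        \<le> Re (test_deriv \<Phi> a \<zeta> (of_real r * \<zeta>) * exp (h (of_real r * \<zeta>)))"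
      by (rule Re_test_deriv_mult_ge[where \<Phi> = \<Phi>]) (use \<zeta> r t a real\<Phi>[of "- ln (1 - r)"] phase[OF r] in auto)
    ultimately show "1 / 2 * (norm (g (of_real r * \<zeta>)) / (1 - r\<^sup>2) powr (a + 1)) \<le> Re (G (of_real r * \<zeta>))"
      by (simp add: G_def)
  qed
  also have "\<dots> \<le> norm (S_op g f (of_real t * \<zeta>))"
    unfolding S by (rule complex_Re_le_cmod)
  finally have lower: "integral {0..t} (\<lambda>r. 1 / 2 * (norm (g (of_real r * \<zeta>)) / (1 - r\<^sup>2) powr (a + 1)))
      \<le> norm (S_op g f (of_real t * \<zeta>))" .
  have "integral {0..t} (\<lambda>r. 1 / 2 * (norm (g (of_real r * \<zeta>)) / (1 - r\<^sup>2) powr (a + 1)))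
      = 1 / 2 * weighted_radial_integral g a t \<zeta>"
    unfolding weighted_radial_integral_def by (rule integral_mult_right)
  with lower show ?thesis by linarith
qed

lemma Bloch_test_functions:
  fixes g h :: "complex \<Rightarrow> complex"
  assumes \<alpha>: "\<alpha> > 0" and holg: "g holomorphic_on ball 0 1" and holh: "h holomorphic_on ball 0 1"
    and g_exp: "\<And>z. z \<in> ball 0 1 \<Longrightarrow> exp (h z) = g z" and h_Bloch: "h \<in> Bloch"
  obtains A where "\<And>t \<zeta>. 0 \<le> t \<Longrightarrow> t < 1 \<Longrightarrow> norm \<zeta> = 1 \<Longrightarrow>
    \<exists>f\<in>Hinf_weighted \<alpha>. Hinf_norm \<alpha> f \<le> A \<and> weighted_radial_integral g \<alpha> t \<zeta> \<le> 2 * norm (S_op g f (of_real t * \<zeta>))"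
proof -
  obtain B where "\<forall>z\<in>ball 0 1. norm ((1 - norm z ^ 2) * norm (deriv h z)) \<le> B"
    using h_Bloch unfolding Bloch_def bounded_iff by auto
  then have Bh: "(1 - norm z ^ 2) * norm (deriv h z) \<le> max B 0" if "z \<in> ball 0 1" for z
    using that abs_ge_self[of "(1 - norm z ^ 2) * norm (deriv h z)"] by fastforce
  have B: "max B 0 \<ge> 0" by simp
  obtain M where approx: "\<And>\<phi> X. (\<And>x y. 0 \<le> x \<Longrightarrow> 0 \<le> y \<Longrightarrow> \<bar>\<phi> x - \<phi> y\<bar> \<le> max B 0 * \<bar>x - y\<bar>) \<Longrightarrow>
      \<exists>\<Phi>. \<Phi> holomorphic_on UNIV \<and> (\<forall>x. Im (\<Phi> (of_real x)) = 0) \<and>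
        (\<forall>x\<in>{0..X}. \<bar>\<phi> x - Re (\<Phi> (of_real x))\<bar> \<le> pi / 3) \<and> (\<forall>w. \<bar>Im w\<bar> \<le> pi / 2 \<longrightarrow> Im (\<Phi> w) \<le> M)"
    by (rule lipschitz_entire_approximation[OF B, of "pi / 3" "pi / 2"]) (simp, blast)
  show ?thesis
  proof (rule that)
    fix t :: real and \<zeta> :: complex assume t: "0 \<le> t" "t < 1" and \<zeta>: "norm \<zeta> = 1"
    define \<phi> where "\<phi> x = Im (h (of_real (1 - exp (- x)) * \<zeta>))" for x
    have "\<bar>\<phi> x - \<phi> y\<bar> \<le> max B 0 * \<bar>x - y\<bar>" if "0 \<le> x" "0 \<le> y" for x y
      using abs_Im_le_cmod Bloch_radial_lipschitz[OF holh Bh \<zeta> that]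
      unfolding \<phi>_def by (metis Im_complex_div_lemma minus_complex.sel(2) order_trans)
    then obtain \<Phi> where hol\<Phi>: "\<Phi> holomorphic_on UNIV" and real\<Phi>: "\<And>x. Im (\<Phi> (of_real x)) = 0"
      and close: "\<And>x. x \<in> {0..- ln (1 - t)} \<Longrightarrow> \<bar>\<phi> x - Re (\<Phi> (of_real x))\<bar> \<le> pi / 3"
      and strip: "\<And>w. \<bar>Im w\<bar> \<le> pi / 2 \<Longrightarrow> Im (\<Phi> w) \<le> M"
      using approx[of \<phi> "- ln (1 - t)"] by blast
    define F where "F = test_deriv \<Phi> \<alpha> \<zeta>"
    define f where "f z = contour_integral (linepath 0 z) F" for z
    have holF: "F holomorphic_on ball 0 1"
      unfolding F_def by (rule test_deriv_holomorphic[OF \<zeta> hol\<Phi>])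
    have F_bound: "norm (F w) \<le> exp M * (1 - norm w) powr (- (\<alpha> + 1))" if "w \<in> ball 0 1" for w
      unfolding F_def by (rule norm_test_deriv_le[OF \<zeta> \<alpha> that strip])
    note f_Hinf = segment_primitive_in_Hinf_weighted[OF \<alpha> holF _ F_bound, folded f_def[abs_def]]
    have "deriv f w = test_deriv \<Phi> \<alpha> \<zeta> w" if "w \<in> ball 0 1" for w
      using segment_primitive_deriv[OF convex_ball open_ball holF, of 0 w] that
      unfolding f_def[abs_def] F_def by (simp add: DERIV_imp_deriv)
    moreover have "\<bar>Im (h (of_real r * \<zeta>)) - Re (\<Phi> (of_real (- ln (1 - r))))\<bar> \<le> pi / 3"
      if "r \<in> {0..t}" for r
      using close[of "- ln (1 - r)"] that t by (simp add: \<phi>_def)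
    ultimately have "weighted_radial_integral g \<alpha> t \<zeta> \<le> 2 * norm (S_op g f (of_real t * \<zeta>))"
      by (intro radial_lower_bound[OF \<alpha> \<zeta> t holg g_exp hol\<Phi> real\<Phi>]) auto
    then show "\<exists>f\<in>Hinf_weighted \<alpha>. Hinf_norm \<alpha> f \<le> 2 powr \<alpha> * exp M / \<alpha> \<and>
        weighted_radial_integral g \<alpha> t \<zeta> \<le> 2 * norm (S_op g f (of_real t * \<zeta>))"
      using f_Hinf by auto
  qed
qed

lemma radial_bound_if_S_bounded:
  fixes g h :: "complex \<Rightarrow> complex"
  assumes \<alpha>: "\<alpha> > 0" and holg: "g holomorphic_on ball 0 1" and holh: "h holomorphic_on ball 0 1"
    and g_exp: "\<And>z. z \<in> ball 0 1 \<Longrightarrow> exp (h z) = g z" and h_Bloch: "h \<in> Bloch"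
    and bounded: "S_bounded g \<alpha> \<beta>"
  obtains K where "\<And>t \<zeta>. 0 \<le> t \<Longrightarrow> t < 1 \<Longrightarrow> norm \<zeta> = 1 \<Longrightarrow>
    (1 - t\<^sup>2) powr \<beta> * weighted_radial_integral g \<alpha> t \<zeta> \<le> K"
proof -
  obtain C where C: "\<And>f. f \<in> Hinf_weighted \<alpha> \<Longrightarrow>
      S_op g f \<in> Hinf_weighted \<beta> \<and> Hinf_norm \<beta> (S_op g f) \<le> C * Hinf_norm \<alpha> f"
    using bounded unfolding S_bounded_def by blast
  obtain A where A: "\<And>t \<zeta>. 0 \<le> t \<Longrightarrow> t < 1 \<Longrightarrow> norm \<zeta> = 1 \<Longrightarrow>
      \<exists>f\<in>Hinf_weighted \<alpha>. Hinf_norm \<alpha> f \<le> A \<and> weighted_radial_integral g \<alpha> t \<zeta> \<le> 2 * norm (S_op g f (of_real t * \<zeta>))"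
    using Bloch_test_functions[OF \<alpha> holg holh g_exp h_Bloch] by blast
  show ?thesis
  proof (rule that)
    fix t :: real and \<zeta> :: complex assume t: "0 \<le> t" "t < 1" and \<zeta>: "norm \<zeta> = 1"
    then obtain f where f: "f \<in> Hinf_weighted \<alpha>" "Hinf_norm \<alpha> f \<le> A"
      and lower: "weighted_radial_integral g \<alpha> t \<zeta> \<le> 2 * norm (S_op g f (of_real t * \<zeta>))"
      using A by blast
    have "(1 - t\<^sup>2) powr \<beta> * weighted_radial_integral g \<alpha> t \<zeta>
        \<le> 2 * ((1 - norm (of_real t * \<zeta>) ^ 2) powr \<beta> * norm (S_op g f (of_real t * \<zeta>)))"
      using mult_left_mono[OF lower, of "(1 - t\<^sup>2) powr \<beta>"] t \<zeta> by (simp add: norm_mult)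
    also have "\<dots> \<le> 2 * (C * Hinf_norm \<alpha> f)"
      using Hinf_norm_ge[OF conjunct1[OF C[OF f(1)]] radial_in_ball[OF \<zeta>, of t t]] C[OF f(1)] t by simp
    also have "\<dots> \<le> 2 * (max C 0 * A)"
      using f Hinf_norm_nonneg[OF f(1)] by (intro mult_left_mono mult_mono) auto
    finally show "(1 - t\<^sup>2) powr \<beta> * weighted_radial_integral g \<alpha> t \<zeta> \<le> 2 * (max C 0 * A)" .
  qed
qed

lemma weighted_radial_integral_bounded_near_0:
  fixes g :: "complex \<Rightarrow> complex"
  assumes "\<alpha> \<ge> 0" "\<beta> \<ge> 0" and contg: "continuous_on (ball 0 1) g" and b: "b < 1"
  shows "\<exists>M. \<forall>t\<in>{0..b}. \<forall>\<zeta>. norm \<zeta> = 1 \<longrightarrow> (1 - t\<^sup>2) powr \<beta> * weighted_radial_integral g \<alpha> t \<zeta> \<le> M"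
proof -
  have "cball 0 (max 0 b) \<subseteq> ball (0::complex) 1" using b by auto
  then have "compact (g ` cball 0 (max 0 b))"
    by (intro compact_continuous_image continuous_on_subset[OF contg]) auto
  then obtain Mg where Mg: "\<And>z. z \<in> cball 0 (max 0 b) \<Longrightarrow> norm (g z) \<le> Mg"
    using compact_imp_bounded bounded_iff by (metis image_eqI)
  have Mg0: "0 \<le> Mg" using Mg[of 0] by (simp add: order_trans[OF norm_ge_zero])
  define c where "c = Mg / (1 - b\<^sup>2) powr (\<alpha> + 1)"
  show ?thesis
  proof (intro exI[of _ c] ballI allI impI)
    fix t and \<zeta> :: complex assume t: "t \<in> {0..b}" and \<zeta>: "norm \<zeta> = 1"
    have b2: "1 - b\<^sup>2 > 0" using b t by (simp add: power_less_one_iff abs_less_iff)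
    have "weighted_radial_integral g \<alpha> t \<zeta> \<le> integral {0..t} (\<lambda>r. c)"
      unfolding weighted_radial_integral_def
    proof (rule integral_le)
      show "(\<lambda>r. norm (g (of_real r * \<zeta>)) / (1 - r\<^sup>2) powr (\<alpha> + 1)) integrable_on {0..t}"
        using weighted_radial_integrand_continuous[OF contg _ \<zeta>] t b
        by (intro integrable_continuous_interval) auto
      fix r assume r: "r \<in> {0..t}"
      have "norm (g (of_real r * \<zeta>)) \<le> Mg" using r t \<zeta> by (intro Mg) (simp add: norm_mult)
      moreover have "(1 - b\<^sup>2) powr (\<alpha> + 1) \<le> (1 - r\<^sup>2) powr (\<alpha> + 1)"
        using r t b2 assms(1) by (intro powr_mono2) (auto intro!: power_mono)
      ultimately show "norm (g (of_real r * \<zeta>)) / (1 - r\<^sup>2) powr (\<alpha> + 1) \<le> c"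
        unfolding c_def using b2 Mg0 by (intro frac_le) auto
    qed auto
    also have "\<dots> = t * c" using t by simp
    also have "\<dots> \<le> c"
      using t b Mg0 b2 by (intro mult_left_le_one_le) (auto simp: c_def)
    finally have I: "weighted_radial_integral g \<alpha> t \<zeta> \<le> c" .
    have I0: "0 \<le> weighted_radial_integral g \<alpha> t \<zeta>"
      using weighted_radial_integral_nonneg[OF contg _ \<zeta>] t b by simp
    have "(1 - t\<^sup>2) powr \<beta> \<le> 1"
      using t b assms(2) by (intro powr_le1) (auto simp: abs_le_iff power_le_one)
    then show "(1 - t\<^sup>2) powr \<beta> * weighted_radial_integral g \<alpha> t \<zeta> \<le> c"
      using I I0 by (metis mult_left_le_one_le order_trans powr_ge_zero)
  qed
qed

lemma Limsup_SUP_less_infinity_iff_bounded: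
  fixes P :: "real \<Rightarrow> 'a \<Rightarrow> real"
  assumes near_0: "\<And>b. b < 1 \<Longrightarrow> \<exists>M. \<forall>t\<in>{0..b}. \<forall>\<theta>\<in>\<Theta>. P t \<theta> \<le> M"
  shows "Limsup (at_left 1) (\<lambda>t. SUP \<theta>\<in>\<Theta>. ereal (P t \<theta>)) < \<infinity> \<longleftrightarrow>
    (\<exists>K. \<forall>t\<in>{0..<1}. \<forall>\<theta>\<in>\<Theta>. P t \<theta> \<le> K)"
proof
  assume "Limsup (at_left 1) (\<lambda>t. SUP \<theta>\<in>\<Theta>. ereal (P t \<theta>)) < \<infinity>"
  then have "Limsup (at_left 1) (\<lambda>t. SUP \<theta>\<in>\<Theta>. ereal (P t \<theta>)) \<noteq> \<infinity>" by simp
  then obtain M :: real where "Limsup (at_left 1) (\<lambda>t. SUP \<theta>\<in>\<Theta>. ereal (P t \<theta>)) < ereal M"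
    by (auto simp: less_PInf_Ex_of_nat)
  then have "eventually (\<lambda>t. (SUP \<theta>\<in>\<Theta>. ereal (P t \<theta>)) < ereal M) (at_left (1::real))"
    by (rule Limsup_lessD)
  then obtain b where b: "b < 1" and near_1: "\<And>t. b < t \<Longrightarrow> t < 1 \<Longrightarrow> (SUP \<theta>\<in>\<Theta>. ereal (P t \<theta>)) < ereal M"
    unfolding eventually_at_left_field by blast
  obtain M' where M': "\<forall>t\<in>{0..b}. \<forall>\<theta>\<in>\<Theta>. P t \<theta> \<le> M'"
    using near_0[OF b] by blast
  have "P t \<theta> \<le> max M M'" if "t \<in> {0..<1}" "\<theta> \<in> \<Theta>" for t \<theta>
  proof (cases "t \<le> b")
    case False
    have "ereal (P t \<theta>) \<le> (SUP \<theta>\<in>\<Theta>. ereal (P t \<theta>))" using that by (intro SUP_upper)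
    also have "\<dots> < ereal M" using near_1[of t] False that by simp
    finally show ?thesis by simp
  next
    case True
    then have "P t \<theta> \<le> M'" using M' that by auto
    then show ?thesis by simp
  qed
  then show "\<exists>K. \<forall>t\<in>{0..<1}. \<forall>\<theta>\<in>\<Theta>. P t \<theta> \<le> K" by blast
next
  assume "\<exists>K. \<forall>t\<in>{0..<1}. \<forall>\<theta>\<in>\<Theta>. P t \<theta> \<le> K"
  then obtain K where K: "\<forall>t\<in>{0..<1}. \<forall>\<theta>\<in>\<Theta>. P t \<theta> \<le> K" by blast
  have "eventually (\<lambda>t. t \<in> {0<..<1}) (at_left (1::real))"
    by (rule eventually_at_left_real) simp
  then have "eventually (\<lambda>t. (SUP \<theta>\<in>\<Theta>. ereal (P t \<theta>)) \<le> ereal K) (at_left (1::real))"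
    by (rule eventually_mono) (use K in \<open>force intro: SUP_least\<close>)
  then have "Limsup (at_left 1) (\<lambda>t. SUP \<theta>\<in>\<Theta>. ereal (P t \<theta>)) \<le> ereal K"
    by (rule Limsup_bounded)
  then show "Limsup (at_left 1) (\<lambda>t. SUP \<theta>\<in>\<Theta>. ereal (P t \<theta>)) < \<infinity>"
    using le_less_trans[of _ "ereal K" \<infinity>] by simp
qed

lemma unit_circle_exp_iff: "(\<forall>\<theta>\<in>{0..<2 * pi}. P (exp (\<i> * of_real \<theta>))) \<longleftrightarrow> (\<forall>\<zeta>. norm \<zeta> = 1 \<longrightarrow> P \<zeta>)"
proof
  assume "\<forall>\<theta>\<in>{0..<2 * pi}. P (exp (\<i> * of_real \<theta>))"
  show "\<forall>\<zeta>. norm \<zeta> = 1 \<longrightarrow> P \<zeta>"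
  proof (intro allI impI)
    fix \<zeta> :: complex assume "norm \<zeta> = 1"
    then have "\<zeta> = exp (\<i> * of_real (Arg2pi \<zeta>))" using Arg2pi_eq[of \<zeta>] by simp
    then show "P \<zeta>" using Arg2pi[of \<zeta>] \<open>\<forall>\<theta>\<in>{0..<2 * pi}. P (exp (\<i> * of_real \<theta>))\<close> by (metis atLeastLessThan_iff)
  qed
qed simp

theorem theorem2:
  fixes g :: "complex \<Rightarrow> complex" and \<alpha> \<beta> :: real
  assumes "\<alpha> > 0" and "\<beta> \<ge> 0"
    and "g holomorphic_on ball 0 1"
    and "\<forall>z\<in>ball 0 1. g z \<noteq> 0"
    and "\<exists>h. h holomorphic_on ball 0 1 \<and> (\<forall>z\<in>ball 0 1. exp (h z) = g z) \<and> h \<in> Bloch"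
  shows "S_bounded g \<alpha> \<beta> \<longleftrightarrow>
    Limsup (at_left 1) (\<lambda>t::real. SUP \<theta>\<in>{0..<2*pi}. ereal ((1 - t\<^sup>2) powr \<beta> *
        integral {0..t} (\<lambda>r. norm (g (of_real r * exp (\<i> * of_real \<theta>))) / (1 - r\<^sup>2) powr (\<alpha> + 1))))
      < \<infinity>"
proof -
  obtain h where h: "h holomorphic_on ball 0 1" "\<And>z. z \<in> ball 0 1 \<Longrightarrow> exp (h z) = g z" "h \<in> Bloch"
    using assms(5) by blast
  have contg: "continuous_on (ball 0 1) g" using assms(3) by (rule holomorphic_on_imp_continuous_on)
  define P where "P t \<zeta> = (1 - t\<^sup>2) powr \<beta> * weighted_radial_integral g \<alpha> t \<zeta>" for t \<zeta>
  have "S_bounded g \<alpha> \<beta> \<longleftrightarrow> (\<exists>K. \<forall>t\<in>{0..<1}. \<forall>\<zeta>. norm \<zeta> = 1 \<longrightarrow> P t \<zeta> \<le> K)"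
  proof
    assume bounded: "S_bounded g \<alpha> \<beta>"
    obtain K where "\<And>t \<zeta>. 0 \<le> t \<Longrightarrow> t < 1 \<Longrightarrow> norm \<zeta> = 1 \<Longrightarrow> P t \<zeta> \<le> K"
      using radial_bound_if_S_bounded[OF assms(1,3) h bounded] unfolding P_def by blast
    then show "\<exists>K. \<forall>t\<in>{0..<1}. \<forall>\<zeta>. norm \<zeta> = 1 \<longrightarrow> P t \<zeta> \<le> K"
      by (intro exI[of _ K]) auto
  next
    assume "\<exists>K. \<forall>t\<in>{0..<1}. \<forall>\<zeta>. norm \<zeta> = 1 \<longrightarrow> P t \<zeta> \<le> K"
    then obtain K where K: "\<forall>t\<in>{0..<1}. \<forall>\<zeta>. norm \<zeta> = 1 \<longrightarrow> P t \<zeta> \<le> K" by blast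
    show "S_bounded g \<alpha> \<beta>"
      by (rule S_bounded_if_radial_bound[OF _ assms(3), where K = K]) (use K assms(1) in \<open>auto simp: P_def\<close>)
  qed
  also have "\<dots> \<longleftrightarrow> (\<exists>K. \<forall>t\<in>{0..<1}. \<forall>\<theta>\<in>{0..<2 * pi}. P t (exp (\<i> * of_real \<theta>)) \<le> K)"
  proof -
    have "(\<forall>\<zeta>. norm \<zeta> = 1 \<longrightarrow> P t \<zeta> \<le> K) \<longleftrightarrow> (\<forall>\<theta>\<in>{0..<2 * pi}. P t (exp (\<i> * of_real \<theta>)) \<le> K)"
      for t K by (rule unit_circle_exp_iff[symmetric])
    then show ?thesis by (simp only:)
  qed
  also have "\<dots> \<longleftrightarrow> Limsup (at_left 1) (\<lambda>t. SUP \<theta>\<in>{0..<2 * pi}. ereal (P t (exp (\<i> * of_real \<theta>)))) < \<infinity>"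
  proof (rule Limsup_SUP_less_infinity_iff_bounded[symmetric])
    fix b :: real assume "b < 1"
    then obtain M where "\<forall>t\<in>{0..b}. \<forall>\<zeta>. norm \<zeta> = 1 \<longrightarrow> P t \<zeta> \<le> M"
      using weighted_radial_integral_bounded_near_0[OF _ assms(2) contg] assms(1) unfolding P_def by force
    then show "\<exists>M. \<forall>t\<in>{0..b}. \<forall>\<theta>\<in>{0..<2 * pi}. P t (exp (\<i> * of_real \<theta>)) \<le> M"
      using norm_exp_i_times by blast
  qed
  finally show ?thesis
    by (simp add: P_def weighted_radial_integral_def)
qed

end
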